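(* Let $\mu,\nu$ be the Gibbs distributions of two spin systems on the same graph $G=(V,E)$. Then $d_{TV}(\mu,\nu)\ge C\cdot d_{\mathrm{par}}(\mu,\nu)$, where: (1) for two hardcore models both satisfying the uniqueness condition, $C=\frac1{5000}$; (2) for two hardcore models both $b$-marginally bounded ($0<b<1$), $C=b^3$; (3) for two soft-Ising models both $b$-marginally bounded ($0<b<1$), $C=\frac{b^2}{2}$.
   Context: Hardcore model $(G,\lambda)$, $\lambda\in\mathbb{R}_{\ge0}^V$: weight on $\sigma\in\{-1,+1\}^V$ is $\prod_{v:\sigma_v=+1}\lambda_v$ if $\{v:\sigma_v=+1\}$ is independent, else $0$. Soft-Ising model $(G,J,h)$: $J\in\mathbb{R}^{V\times V}$ symmetric, $J_{uv}\ne0$ only for edges, $h\in\mathbb{R}^V$ (finite), weight $\exp(\sum_{\{u,v\}\in E}J_{uv}\sigma_u\sigma_v+\sum_vh_v\sigma_v)$. Gibbs distribution = normalized weight. Uniqueness condition: $\lambda_v\le(1-\eta)\lambda_c(\Delta)$ for all $v$ for some constant $\eta\in(0,1)$, where $\Delta\ge3$ is the maximum degree and $\lambda_c(\Delta)=\frac{(\Delta-1)^{\Delta-1}}{(\Delta-2)^\Delta}$. Parameter distance: for hardcore models, $d_{\mathrm{par}}(\mu,\nu)=\max_v|\lambda^\mu_v-\lambda^\nu_v|$; for soft-Ising models, $d_{\mathrm{par}}(\mu,\nu)=\max\{\max_{u,v}|J^\mu_{uv}-J^\nu_{uv}|,\ \max_v\frac{|h^\mu_v-h^\nu_v|}{\deg_v+1}\}$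 with $\deg_v$ the degree of $v$ in $G$. $b$-marginally bounded: for every $\Lambda\subseteq V$, feasible $\sigma\in\{\pm1\}^\Lambda$, $v\in V$, $c\in\{\pm1\}$, if $\mu^\sigma_v(c)>0$ then $\mu^\sigma_v(c)\ge b$ ($\mu^\sigma_v$ = marginal at $v$ of $\mu$ conditioned on $\sigma$). *)

theory Defs
  imports Complex_Main
begin

definition simple_graph :: "'v set \<Rightarrow> ('v \<Rightarrow> 'v \<Rightarrow> bool) \<Rightarrow> bool" where
  "simple_graph V E \<longleftrightarrow> finite V \<and> (\<forall>u v. E u v \<longrightarrow> u \<in> V \<and> v \<in> V)
     \<and> (\<forall>u v. E u v \<longrightarrow> E v u) \<and> (\<forall>v. \<not> E v v)"

definition deg :: "'v set \<Rightarrow> ('v \<Rightarrow> 'v \<Rightarrow> bool) \<Rightarrow> 'v \<Rightarrow> nat" where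
  "deg V E v = card {u \<in> V. E v u}"

definition max_deg :: "'v set \<Rightarrow> ('v \<Rightarrow> 'v \<Rightarrow> bool) \<Rightarrow> nat" where
  "max_deg V E = Max (insert 0 (deg V E ` V))"

definition configs :: "'v set \<Rightarrow> ('v \<Rightarrow> int) set" where
  "configs V = {\<sigma>. (\<forall>v\<in>V. \<sigma> v = 1 \<or> \<sigma> v = -1) \<and> (\<forall>v. v \<notin> V \<longrightarrow> \<sigma> v = 0)}"

definition hc_weight :: "'v set \<Rightarrow> ('v \<Rightarrow> 'v \<Rightarrow> bool) \<Rightarrow> ('v \<Rightarrow> real) \<Rightarrow> ('v \<Rightarrow> int) \<Rightarrow> real" where
  "hc_weight V E lam \<sigma> =
     (if (\<forall>u\<in>V. \<forall>v\<in>V. E u v \<longrightarrow> \<not> (\<sigma> u = 1 \<and> \<sigma> v = 1))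
      then (\<Prod>v\<in>{v\<in>V. \<sigma> v = 1}. lam v) else 0)"

text \<open>Sum over unordered edges {u,v} written as half the sum over ordered adjacent pairs
  (J is symmetric).\<close>
definition ising_weight :: "'v set \<Rightarrow> ('v \<Rightarrow> 'v \<Rightarrow> bool) \<Rightarrow> ('v \<Rightarrow> 'v \<Rightarrow> real) \<Rightarrow> ('v \<Rightarrow> real)
     \<Rightarrow> ('v \<Rightarrow> int) \<Rightarrow> real" where
  "ising_weight V E J h \<sigma> =
     exp ((\<Sum>u\<in>V. \<Sum>v\<in>{v\<in>V. E u v}. J u v * of_int (\<sigma> u) * of_int (\<sigma> v)) / 2
          + (\<Sum>v\<in>V. h v * of_int (\<sigma> v)))"

definition gibbs :: "'v set \<Rightarrow> (('v \<Rightarrow> int) \<Rightarrow> real) \<Rightarrow> ('v \<Rightarrow> int) \<Rightarrow> real" where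
  "gibbs V w \<sigma> = (if \<sigma> \<in> configs V then w \<sigma> / (\<Sum>\<tau>\<in>configs V. w \<tau>) else 0)"

definition hardcore_gibbs where
  "hardcore_gibbs V E lam = gibbs V (hc_weight V E lam)"

definition ising_gibbs where
  "ising_gibbs V E J h = gibbs V (ising_weight V E J h)"

definition dtv :: "'v set \<Rightarrow> (('v \<Rightarrow> int) \<Rightarrow> real) \<Rightarrow> (('v \<Rightarrow> int) \<Rightarrow> real) \<Rightarrow> real" where
  "dtv V \<mu> \<nu> = (\<Sum>\<sigma>\<in>configs V. \<bar>\<mu> \<sigma> - \<nu> \<sigma>\<bar>) / 2"

definition hardcore_model where
  "hardcore_model V E lam \<longleftrightarrow> simple_graph V E \<and> (\<forall>v\<in>V. lam v \<ge> 0)"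

definition soft_ising_model where
  "soft_ising_model V E J h \<longleftrightarrow> simple_graph V E \<and> (\<forall>u v. J u v = J v u)
     \<and> (\<forall>u v. J u v \<noteq> 0 \<longrightarrow> E u v)"

definition lambda_c :: "nat \<Rightarrow> real" where
  "lambda_c D = (real D - 1) ^ (D - 1) / (real D - 2) ^ D"

definition uniqueness :: "'v set \<Rightarrow> ('v \<Rightarrow> 'v \<Rightarrow> bool) \<Rightarrow> ('v \<Rightarrow> real) \<Rightarrow> bool" where
  "uniqueness V E lam \<longleftrightarrow> (\<exists>\<eta>::real. 0 < \<eta> \<and> \<eta> < 1 \<and>
      (\<forall>v\<in>V. lam v \<le> (1 - \<eta>) * lambda_c (max_deg V E)))"

definition dpar_hc :: "'v set \<Rightarrow> ('v \<Rightarrow> real) \<Rightarrow> ('v \<Rightarrow> real) \<Rightarrow> real" where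
  "dpar_hc V lam1 lam2 = Max (insert 0 ((\<lambda>v. \<bar>lam1 v - lam2 v\<bar>) ` V))"

definition dpar_ising :: "'v set \<Rightarrow> ('v \<Rightarrow> 'v \<Rightarrow> bool) \<Rightarrow> ('v \<Rightarrow> 'v \<Rightarrow> real) \<Rightarrow> ('v \<Rightarrow> real)
     \<Rightarrow> ('v \<Rightarrow> 'v \<Rightarrow> real) \<Rightarrow> ('v \<Rightarrow> real) \<Rightarrow> real" where
  "dpar_ising V E J1 h1 J2 h2 =
     max (Max (insert 0 ((\<lambda>(u,v). \<bar>J1 u v - J2 u v\<bar>) ` (V \<times> V))))
         (Max (insert 0 ((\<lambda>v. \<bar>h1 v - h2 v\<bar> / (real (deg V E v) + 1)) ` V)))"

definition prob_ev :: "'v set \<Rightarrow> (('v \<Rightarrow> int) \<Rightarrow> real) \<Rightarrow> (('v \<Rightarrow> int) \<Rightarrow> bool) \<Rightarrow> real" where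
  "prob_ev V \<mu> A = (\<Sum>\<tau>\<in>{\<tau>\<in>configs V. A \<tau>}. \<mu> \<tau>)"

definition marg_bounded :: "'v set \<Rightarrow> (('v \<Rightarrow> int) \<Rightarrow> real) \<Rightarrow> real \<Rightarrow> bool" where
  "marg_bounded V \<mu> b \<longleftrightarrow>
     (\<forall>\<Lambda> \<sigma> v c. \<Lambda> \<subseteq> V \<longrightarrow> (\<forall>u\<in>\<Lambda>. \<sigma> u = 1 \<or> \<sigma> u = -1) \<longrightarrow>
        prob_ev V \<mu> (\<lambda>\<tau>. \<forall>u\<in>\<Lambda>. \<tau> u = \<sigma> u) > 0 \<longrightarrow> v \<in> V \<longrightarrow> (c = 1 \<or> c = -1) \<longrightarrow>
        (let p = prob_ev V \<mu> (\<lambda>\<tau>. (\<forall>u\<in>\<Lambda>. \<tau> u = \<sigma> u) \<and> \<tau> v = c)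
                 / prob_ev V \<mu> (\<lambda>\<tau>. \<forall>u\<in>\<Lambda>. \<tau> u = \<sigma> u)
         in p > 0 \<longrightarrow> p \<ge> b))"

end

theory Submission
  imports Defs
begin

text \<open>
  For the hardcore model, mu(sigma_v = +1) = lam_v mu(B_v), where B_v is the event that v and all
  its neighbours are vacant. Both sides are probabilities of events, so comparing the identity under
  the two models gives (lam1_v - lam2_v) mu1(B_v) \<le> (1 + lam2_v) d_TV, and it remains to bound
  mu1(B_v) from below: under uniqueness by the product bound on the partition function,
  Z \<le> prod_(u in N[v]) (1 + lam_u) Z(B_v); under b-marginal boundedness by b^2.

  For the soft Ising model, the spin at v given all other spins has mean tanh L_v, where
  L_v = h_v + sum_u J_vu sigma_u is the local field. Testing both measures against functions that
  ignore sigma_v bounds E_mu1 |tanh L1_v - tanh L2_v| by 4 d_TV. Marginal boundedness keeps tanh L_v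
  away from +-1, so this controls E_mu1 |L1_v - L2_v|; flipping a neighbour u shifts L1_v - L2_v by
  2 (J1_vu - J2_vu), which extracts the couplings, and what remains of L1_v - L2_v is h1_v - h2_v.
\<close>

lemma finite_configs: "finite V \<Longrightarrow> finite (configs V)"
  unfolding configs_def
  by (rule finite_subset[OF _ finite_set_of_finite_funs[of V "{-1,1}" 0]]) auto

lemma configs_spin: "\<sigma> \<in> configs V \<Longrightarrow> v \<in> V \<Longrightarrow> \<sigma> v = 1 \<or> \<sigma> v = -1"
  unfolding configs_def by auto

lemma abs_spin: "\<sigma> \<in> configs V \<Longrightarrow> v \<in> V \<Longrightarrow> \<bar>real_of_int (\<sigma> v)\<bar> = 1"
  unfolding configs_def by auto

lemma configs_upd: "\<sigma> \<in> configs V \<Longrightarrow> u \<in> V \<Longrightarrow> c = 1 \<or> c = -1 \<Longrightarrow> \<sigma>(u := c) \<in> configs V"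
  unfolding configs_def by auto

definition all_minus :: "'v set \<Rightarrow> 'v \<Rightarrow> int" where
  "all_minus V = (\<lambda>x. if x \<in> V then -1 else 0)"

lemma all_minus_in_configs: "all_minus V \<in> configs V"
  unfolding all_minus_def configs_def by auto

definition flip :: "'v \<Rightarrow> ('v \<Rightarrow> int) \<Rightarrow> 'v \<Rightarrow> int" where
  "flip v \<sigma> = \<sigma>(v := - \<sigma> v)"

lemma flip_apply: "flip v \<sigma> x = (if x = v then - \<sigma> v else \<sigma> x)"
  unfolding flip_def by auto

lemma flip_flip [simp]: "flip v (flip v \<sigma>) = \<sigma>"
  unfolding flip_def by auto

lemma flip_in_configs: "\<sigma> \<in> configs V \<Longrightarrow> v \<in> V \<Longrightarrow> flip v \<sigma> \<in> configs V"
  unfolding flip_def configs_def by auto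

lemma flip_neq: "\<sigma> \<in> configs V \<Longrightarrow> v \<in> V \<Longrightarrow> flip v \<sigma> \<noteq> \<sigma>"
  using configs_spin[of \<sigma> V v] by (auto simp: fun_eq_iff flip_apply)

lemma sum_configs_flip:
  assumes "v \<in> V"
  shows "(\<Sum>\<sigma>\<in>configs V. g (flip v \<sigma>)) = (\<Sum>\<sigma>\<in>configs V. g \<sigma>)"
  by (rule sum.reindex_bij_witness[where i = "flip v" and j = "flip v"])
    (use assms flip_in_configs in auto)

lemma sum_spin_plus_eq_sum_spin_minus:
  assumes u: "u \<in> V" and P: "\<And>\<sigma> c. P (\<sigma>(u := c)) = P \<sigma>"
  shows "(\<Sum>\<sigma>\<in>{\<sigma>\<in>configs V. P \<sigma> \<and> \<sigma> u = 1}. g \<sigma>)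
       = (\<Sum>\<sigma>\<in>{\<sigma>\<in>configs V. P \<sigma> \<and> \<sigma> u = -1}. g (\<sigma>(u := 1)))"
proof (rule sum.reindex_bij_witness[where i = "\<lambda>\<sigma>. \<sigma>(u := 1)" and j = "\<lambda>\<sigma>. \<sigma>(u := -1)"])
  fix \<sigma> assume "\<sigma> \<in> {\<sigma>\<in>configs V. P \<sigma> \<and> \<sigma> u = 1}"
  then show "\<sigma>(u := -1, u := 1) = \<sigma>" "g (\<sigma>(u := -1, u := 1)) = g \<sigma>"
    and "\<sigma>(u := -1) \<in> {\<sigma>\<in>configs V. P \<sigma> \<and> \<sigma> u = -1}"
    using u P configs_upd[of \<sigma> V u "-1"] by (auto simp: fun_upd_idem)
next
  fix \<sigma> assume "\<sigma> \<in> {\<sigma>\<in>configs V. P \<sigma> \<and> \<sigma> u = -1}"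
  then show "\<sigma>(u := 1, u := -1) = \<sigma>" "\<sigma>(u := 1) \<in> {\<sigma>\<in>configs V. P \<sigma> \<and> \<sigma> u = 1}"
    using u P configs_upd[of \<sigma> V u 1] by auto
qed

lemma sum_gibbs_eq:
  assumes "A \<subseteq> configs V"
  shows "(\<Sum>\<sigma>\<in>A. gibbs V w \<sigma>) = (\<Sum>\<sigma>\<in>A. w \<sigma>) / (\<Sum>\<tau>\<in>configs V. w \<tau>)"
proof -
  have "(\<Sum>\<sigma>\<in>A. gibbs V w \<sigma>) = (\<Sum>\<sigma>\<in>A. w \<sigma> / (\<Sum>\<tau>\<in>configs V. w \<tau>))"
    by (rule sum.cong[OF refl]) (use assms in \<open>auto simp: gibbs_def\<close>)
  then show ?thesis by (simp add: sum_divide_distrib)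
qed

lemma sum_gibbs_configs: "(\<Sum>\<tau>\<in>configs V. w \<tau>) \<noteq> 0 \<Longrightarrow> (\<Sum>\<sigma>\<in>configs V. gibbs V w \<sigma>) = 1"
  using sum_gibbs_eq[of "configs V" V w] by simp

lemma gibbs_nonneg: "(\<And>\<sigma>. w \<sigma> \<ge> 0) \<Longrightarrow> gibbs V w \<sigma> \<ge> 0"
  unfolding gibbs_def by (auto intro!: divide_nonneg_nonneg sum_nonneg)

lemma dtv_nonneg: "dtv V \<mu> \<nu> \<ge> 0"
  unfolding dtv_def by (simp add: sum_nonneg)

lemma dtv_commute: "dtv V \<mu> \<nu> = dtv V \<nu> \<mu>"
  unfolding dtv_def by (simp add: abs_minus_commute)

lemma abs_sum_diff_mult_le_dtv:
  assumes "\<And>\<sigma>. \<sigma> \<in> configs V \<Longrightarrow> \<bar>f \<sigma>\<bar> \<le> 1"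
  shows "\<bar>\<Sum>\<sigma>\<in>configs V. (\<mu> \<sigma> - \<nu> \<sigma>) * f \<sigma>\<bar> \<le> 2 * dtv V \<mu> \<nu>"
proof -
  have "\<bar>\<Sum>\<sigma>\<in>configs V. (\<mu> \<sigma> - \<nu> \<sigma>) * f \<sigma>\<bar> \<le> (\<Sum>\<sigma>\<in>configs V. \<bar>(\<mu> \<sigma> - \<nu> \<sigma>) * f \<sigma>\<bar>)"
    by (rule sum_abs)
  also have "\<dots> \<le> (\<Sum>\<sigma>\<in>configs V. \<bar>\<mu> \<sigma> - \<nu> \<sigma>\<bar>)"
    by (rule sum_mono) (use assms in \<open>auto simp: abs_mult mult_left_le\<close>)
  finally show ?thesis unfolding dtv_def by simp
qed

lemma abs_sum_diff_le_dtv: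
  assumes fin: "finite (configs V)" and A: "A \<subseteq> configs V"
    and \<mu>: "(\<Sum>\<sigma>\<in>configs V. \<mu> \<sigma>) = 1" and \<nu>: "(\<Sum>\<sigma>\<in>configs V. \<nu> \<sigma>) = 1"
  shows "\<bar>(\<Sum>\<sigma>\<in>A. \<mu> \<sigma>) - (\<Sum>\<sigma>\<in>A. \<nu> \<sigma>)\<bar> \<le> dtv V \<mu> \<nu>"
proof -
  let ?f = "\<lambda>\<sigma>. if \<sigma> \<in> A then 1 else (-1::real)"
  have split: "(\<Sum>\<sigma>\<in>configs V. g \<sigma>) = (\<Sum>\<sigma>\<in>A. g \<sigma>) + (\<Sum>\<sigma>\<in>configs V - A. g \<sigma>)" for g :: "_ \<Rightarrow> real"
    using fin A by (metis sum.subset_diff add.commute)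
  have "(\<Sum>\<sigma>\<in>configs V. (\<mu> \<sigma> - \<nu> \<sigma>) * ?f \<sigma>)
      = (\<Sum>\<sigma>\<in>A. \<mu> \<sigma> - \<nu> \<sigma>) - (\<Sum>\<sigma>\<in>configs V - A. \<mu> \<sigma> - \<nu> \<sigma>)"
    by (simp add: split sum_negf[symmetric])
  also have "(\<Sum>\<sigma>\<in>configs V - A. \<mu> \<sigma> - \<nu> \<sigma>) = - (\<Sum>\<sigma>\<in>A. \<mu> \<sigma> - \<nu> \<sigma>)"
    using split[of "\<lambda>\<sigma>. \<mu> \<sigma> - \<nu> \<sigma>"] \<mu> \<nu> by (simp add: sum_subtractf)
  finally have eq: "(\<Sum>\<sigma>\<in>configs V. (\<mu> \<sigma> - \<nu> \<sigma>) * ?f \<sigma>) = 2 * ((\<Sum>\<sigma>\<in>A. \<mu> \<sigma>) - (\<Sum>\<sigma>\<in>A. \<nu> \<sigma>))"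
    by (simp add: sum_subtractf)
  have "\<bar>\<Sum>\<sigma>\<in>configs V. (\<mu> \<sigma> - \<nu> \<sigma>) * ?f \<sigma>\<bar> \<le> 2 * dtv V \<mu> \<nu>"
    by (rule abs_sum_diff_mult_le_dtv) simp
  then show ?thesis unfolding eq abs_mult by simp
qed

lemma marg_boundedD:
  assumes mb: "marg_bounded V \<mu> b" and fin: "finite V" and \<mu>: "\<And>\<tau>. \<tau> \<in> configs V \<Longrightarrow> \<mu> \<tau> \<ge> 0"
    and \<Lambda>: "\<Lambda> \<subseteq> V" "\<forall>u\<in>\<Lambda>. \<sigma> u = 1 \<or> \<sigma> u = -1" and v: "v \<in> V" and c: "c = 1 \<or> c = -1"
    and pos: "prob_ev V \<mu> (\<lambda>\<tau>. (\<forall>u\<in>\<Lambda>. \<tau> u = \<sigma> u) \<and> \<tau> v = c) > 0"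
  shows "b * prob_ev V \<mu> (\<lambda>\<tau>. \<forall>u\<in>\<Lambda>. \<tau> u = \<sigma> u) \<le> prob_ev V \<mu> (\<lambda>\<tau>. (\<forall>u\<in>\<Lambda>. \<tau> u = \<sigma> u) \<and> \<tau> v = c)"
proof -
  define P where "P = prob_ev V \<mu> (\<lambda>\<tau>. \<forall>u\<in>\<Lambda>. \<tau> u = \<sigma> u)"
  define Q where "Q = prob_ev V \<mu> (\<lambda>\<tau>. (\<forall>u\<in>\<Lambda>. \<tau> u = \<sigma> u) \<and> \<tau> v = c)"
  have "Q \<le> P"
    unfolding P_def Q_def prob_ev_def by (rule sum_mono2) (use finite_configs[OF fin] \<mu> in auto)
  with pos have "P > 0" unfolding Q_def by linarith
  moreover have "Q / P > 0 \<longrightarrow> Q / P \<ge> b"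
    using mb \<Lambda> v c \<open>P > 0\<close> unfolding marg_bounded_def P_def Q_def Let_def by blast
  ultimately have "Q / P \<ge> b" using pos unfolding Q_def by simp
  with \<open>P > 0\<close> show ?thesis unfolding P_def Q_def by (simp add: le_divide_eq mult.commute)
qed

section \<open>Hardcore model\<close>

lemma simple_graph_finite: "simple_graph V E \<Longrightarrow> finite V"
  unfolding simple_graph_def by auto

lemma hardcore_model_finite: "hardcore_model V E lam \<Longrightarrow> finite V"
  unfolding hardcore_model_def simple_graph_def by auto

lemma hc_weight_nonneg: "hardcore_model V E lam \<Longrightarrow> hc_weight V E lam \<sigma> \<ge> 0"
  unfolding hc_weight_def hardcore_model_def by (auto intro: prod_nonneg)

lemma hc_weight_all_minus: "hc_weight V E lam (all_minus V) = 1"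
  unfolding hc_weight_def all_minus_def by auto

lemma hc_weight_eq_0:
  "\<lbrakk>u \<in> V; x \<in> V; E u x; \<sigma> u = 1; \<sigma> x = 1\<rbrakk> \<Longrightarrow> hc_weight V E lam \<sigma> = 0"
  unfolding hc_weight_def by auto

lemma hc_weight_upd_plus:
  assumes sg: "simple_graph V E" and u: "u \<in> V" "\<sigma> u = -1"
  shows "hc_weight V E lam (\<sigma>(u := 1))
       = (if \<forall>x\<in>V. E u x \<longrightarrow> \<sigma> x \<noteq> 1 then lam u * hc_weight V E lam \<sigma> else 0)"
proof (cases "\<forall>x\<in>V. E u x \<longrightarrow> \<sigma> x \<noteq> 1")
  case True
  have indep: "(\<forall>a\<in>V. \<forall>b\<in>V. E a b \<longrightarrow> \<not> ((\<sigma>(u := 1)) a = 1 \<and> (\<sigma>(u := 1)) b = 1))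
           \<longleftrightarrow> (\<forall>a\<in>V. \<forall>b\<in>V. E a b \<longrightarrow> \<not> (\<sigma> a = 1 \<and> \<sigma> b = 1))"
    using True u sg unfolding simple_graph_def by auto metis+
  have "{x\<in>V. (\<sigma>(u := 1)) x = 1} = insert u {x\<in>V. \<sigma> x = 1}" using u by auto
  then have "(\<Prod>x\<in>{x\<in>V. (\<sigma>(u := 1)) x = 1}. lam x) = lam u * (\<Prod>x\<in>{x\<in>V. \<sigma> x = 1}. lam x)"
    using simple_graph_finite[OF sg] u by (simp add: prod.insert)
  then show ?thesis using True indep unfolding hc_weight_def by auto
next
  case False
  then obtain x where "x \<in> V" "E u x" "\<sigma> x = 1" by auto
  with u have "hc_weight V E lam (\<sigma>(u := 1)) = 0"
    by (intro hc_weight_eq_0[of u V x]) auto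
  then show ?thesis by (simp only: if_not_P[OF False])
qed

text \<open>Clearing one site costs at most a factor 1 + lam u, since occupying it
  multiplies the weight by lam u or kills it.\<close>

lemma sum_hc_weight_le_spin_minus:
  assumes hm: "hardcore_model V E lam" and u: "u \<in> V" and P: "\<And>\<sigma> c. P (\<sigma>(u := c)) = P \<sigma>"
  shows "(\<Sum>\<sigma>\<in>{\<sigma>\<in>configs V. P \<sigma>}. hc_weight V E lam \<sigma>)
     \<le> (1 + lam u) * (\<Sum>\<sigma>\<in>{\<sigma>\<in>configs V. P \<sigma> \<and> \<sigma> u = -1}. hc_weight V E lam \<sigma>)"
proof -
  let ?w = "hc_weight V E lam"
  let ?plus = "{\<sigma>\<in>configs V. P \<sigma> \<and> \<sigma> u = 1}" and ?minus = "{\<sigma>\<in>configs V. P \<sigma> \<and> \<sigma> u = -1}"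
  have sg: "simple_graph V E" and lam: "lam u \<ge> 0" using hm u unfolding hardcore_model_def by auto
  have fin: "finite (configs V)" using finite_configs hardcore_model_finite[OF hm] by blast
  have split: "{\<sigma>\<in>configs V. P \<sigma>} = ?plus \<union> ?minus"
    using u unfolding configs_def by auto
  have "(\<Sum>\<sigma>\<in>{\<sigma>\<in>configs V. P \<sigma>}. ?w \<sigma>) = (\<Sum>\<sigma>\<in>?plus. ?w \<sigma>) + (\<Sum>\<sigma>\<in>?minus. ?w \<sigma>)"
    unfolding split by (rule sum.union_disjoint) (use fin in auto)
  also have "(\<Sum>\<sigma>\<in>?plus. ?w \<sigma>) = (\<Sum>\<sigma>\<in>?minus. ?w (\<sigma>(u := 1)))"
    by (rule sum_spin_plus_eq_sum_spin_minus[OF u P])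
  also have "\<dots> \<le> (\<Sum>\<sigma>\<in>?minus. lam u * ?w \<sigma>)"
  proof (rule sum_mono)
    fix \<sigma> assume "\<sigma> \<in> ?minus"
    then show "?w (\<sigma>(u := 1)) \<le> lam u * ?w \<sigma>"
      using hc_weight_upd_plus[OF sg u, of \<sigma> lam] hc_weight_nonneg[OF hm, of \<sigma>] lam by auto
  qed
  also have "\<dots> = lam u * (\<Sum>\<sigma>\<in>?minus. ?w \<sigma>)"
    by (simp add: sum_distrib_left)
  finally show ?thesis by (simp add: algebra_simps)
qed

lemma hc_partition_le_prod:
  assumes hm: "hardcore_model V E lam" and S: "S \<subseteq> V"
  shows "(\<Sum>\<sigma>\<in>configs V. hc_weight V E lam \<sigma>)
     \<le> (\<Prod>u\<in>S. 1 + lam u) * (\<Sum>\<sigma>\<in>{\<sigma>\<in>configs V. \<forall>x\<in>S. \<sigma> x = -1}. hc_weight V E lam \<sigma>)"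
proof -
  have "finite S" using S hardcore_model_finite[OF hm] finite_subset by blast
  then show ?thesis using S
  proof (induction S rule: finite_induct)
    case empty
    then show ?case by simp
  next
    case (insert u S)
    let ?Z = "\<lambda>S. \<Sum>\<sigma>\<in>{\<sigma>\<in>configs V. \<forall>x\<in>S. \<sigma> x = -1}. hc_weight V E lam \<sigma>"
    let ?total = "\<Sum>\<sigma>\<in>configs V. hc_weight V E lam \<sigma>"
    have "{\<sigma>\<in>configs V. (\<forall>x\<in>S. \<sigma> x = -1) \<and> \<sigma> u = -1} = {\<sigma>\<in>configs V. \<forall>x\<in>insert u S. \<sigma> x = -1}"
      by auto
    moreover have "?Z S \<le> (1 + lam u) * (\<Sum>\<sigma>\<in>{\<sigma>\<in>configs V. (\<forall>x\<in>S. \<sigma> x = -1) \<and> \<sigma> u = -1}. hc_weight V E lam \<sigma>)"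
      by (rule sum_hc_weight_le_spin_minus[OF hm]) (use insert in auto)
    ultimately have step: "?Z S \<le> (1 + lam u) * ?Z (insert u S)" by simp
    have "?total \<le> (\<Prod>u\<in>S. 1 + lam u) * ?Z S" using insert by simp
    also have "\<dots> \<le> (\<Prod>u\<in>S. 1 + lam u) * ((1 + lam u) * ?Z (insert u S))"
      using step insert hm unfolding hardcore_model_def by (intro mult_left_mono prod_nonneg) auto
    also have "\<dots> = (\<Prod>u\<in>insert u S. 1 + lam u) * ?Z (insert u S)"
      using insert(1,2) by (simp add: mult.assoc)
    finally show ?case .
  qed
qed

definition vacant_nbhd :: "'v set \<Rightarrow> ('v \<Rightarrow> 'v \<Rightarrow> bool) \<Rightarrow> 'v \<Rightarrow> ('v \<Rightarrow> int) set" where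
  "vacant_nbhd V E v = {\<sigma>\<in>configs V. \<forall>x\<in>insert v {u\<in>V. E v u}. \<sigma> x = -1}"

lemma sum_hc_weight_spin_plus:
  assumes hm: "hardcore_model V E lam" and v: "v \<in> V"
  shows "(\<Sum>\<sigma>\<in>{\<sigma>\<in>configs V. \<sigma> v = 1}. hc_weight V E lam \<sigma>)
     = lam v * (\<Sum>\<sigma>\<in>vacant_nbhd V E v. hc_weight V E lam \<sigma>)"
proof -
  let ?w = "hc_weight V E lam"
  let ?free = "\<lambda>\<sigma>. \<forall>x\<in>{u\<in>V. E v u}. \<sigma> x = -1"
  have sg: "simple_graph V E" using hm unfolding hardcore_model_def by auto
  have fin: "finite (configs V)" using finite_configs hardcore_model_finite[OF hm] by blast
  have "(\<Sum>\<sigma>\<in>{\<sigma>\<in>configs V. \<sigma> v = 1}. ?w \<sigma>) = (\<Sum>\<sigma>\<in>{\<sigma>\<in>configs V. \<sigma> v = -1}. ?w (\<sigma>(v := 1)))"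
    using sum_spin_plus_eq_sum_spin_minus[OF v, of "\<lambda>_. True"] by simp
  also have "\<dots> = (\<Sum>\<sigma>\<in>{\<sigma>\<in>configs V. \<sigma> v = -1}. if ?free \<sigma> then lam v * ?w \<sigma> else 0)"
  proof (rule sum.cong[OF refl])
    fix \<sigma> assume \<sigma>: "\<sigma> \<in> {\<sigma>\<in>configs V. \<sigma> v = -1}"
    then have "(\<forall>x\<in>V. E v x \<longrightarrow> \<sigma> x \<noteq> 1) = ?free \<sigma>" using configs_spin[of \<sigma> V] by auto
    then show "?w (\<sigma>(v := 1)) = (if ?free \<sigma> then lam v * ?w \<sigma> else 0)"
      using hc_weight_upd_plus[OF sg v] \<sigma> by auto
  qed
  also have "\<dots> = (\<Sum>\<sigma>\<in>vacant_nbhd V E v. lam v * ?w \<sigma>)"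
    unfolding vacant_nbhd_def using fin by (simp add: sum.inter_filter[symmetric] conj_commute)
  finally show ?thesis by (simp add: sum_distrib_left)
qed

lemma hc_partition_ge_1: "hardcore_model V E lam \<Longrightarrow> (\<Sum>\<sigma>\<in>configs V. hc_weight V E lam \<sigma>) \<ge> 1"
  using member_le_sum[of "all_minus V" "configs V" "hc_weight V E lam"]
  by (simp add: all_minus_in_configs hc_weight_all_minus hc_weight_nonneg finite_configs hardcore_model_finite)

lemma sum_hardcore_gibbs_eq:
  "A \<subseteq> configs V \<Longrightarrow> (\<Sum>\<sigma>\<in>A. hardcore_gibbs V E lam \<sigma>)
     = (\<Sum>\<sigma>\<in>A. hc_weight V E lam \<sigma>) / (\<Sum>\<tau>\<in>configs V. hc_weight V E lam \<tau>)"
  unfolding hardcore_gibbs_def by (rule sum_gibbs_eq)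

lemma sum_hardcore_gibbs_configs: "hardcore_model V E lam \<Longrightarrow> (\<Sum>\<sigma>\<in>configs V. hardcore_gibbs V E lam \<sigma>) = 1"
  unfolding hardcore_gibbs_def using hc_partition_ge_1 by (intro sum_gibbs_configs) force

lemma hardcore_gibbs_nonneg: "hardcore_model V E lam \<Longrightarrow> hardcore_gibbs V E lam \<sigma> \<ge> 0"
  unfolding hardcore_gibbs_def by (rule gibbs_nonneg) (rule hc_weight_nonneg)

lemma hardcore_prob_spin_plus:
  assumes hm: "hardcore_model V E lam" and v: "v \<in> V"
  shows "(\<Sum>\<sigma>\<in>{\<sigma>\<in>configs V. \<sigma> v = 1}. hardcore_gibbs V E lam \<sigma>)
     = lam v * (\<Sum>\<sigma>\<in>vacant_nbhd V E v. hardcore_gibbs V E lam \<sigma>)"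
  using sum_hc_weight_spin_plus[OF hm v]
  by (simp add: sum_hardcore_gibbs_eq vacant_nbhd_def)

text \<open>Both sides of the identity above are probabilities of events, so each moves by at most
  the total variation distance when lam1 is replaced by lam2.\<close>

lemma hardcore_activity_diff_le_dtv:
  assumes hm1: "hardcore_model V E lam1" and hm2: "hardcore_model V E lam2" and v: "v \<in> V"
  shows "(lam1 v - lam2 v) * (\<Sum>\<sigma>\<in>vacant_nbhd V E v. hardcore_gibbs V E lam1 \<sigma>)
      \<le> (1 + lam2 v) * dtv V (hardcore_gibbs V E lam1) (hardcore_gibbs V E lam2)"
proof -
  let ?d = "dtv V (hardcore_gibbs V E lam1) (hardcore_gibbs V E lam2)"
  define a1 where "a1 = (\<Sum>\<sigma>\<in>{\<sigma>\<in>configs V. \<sigma> v = 1}. hardcore_gibbs V E lam1 \<sigma>)"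
  define a2 where "a2 = (\<Sum>\<sigma>\<in>{\<sigma>\<in>configs V. \<sigma> v = 1}. hardcore_gibbs V E lam2 \<sigma>)"
  define x1 where "x1 = (\<Sum>\<sigma>\<in>vacant_nbhd V E v. hardcore_gibbs V E lam1 \<sigma>)"
  define x2 where "x2 = (\<Sum>\<sigma>\<in>vacant_nbhd V E v. hardcore_gibbs V E lam2 \<sigma>)"
  have fin: "finite (configs V)" using finite_configs hardcore_model_finite[OF hm1] by blast
  have "\<bar>a1 - a2\<bar> \<le> ?d" "\<bar>x1 - x2\<bar> \<le> ?d"
    unfolding a1_def a2_def x1_def x2_def vacant_nbhd_def
    by (rule abs_sum_diff_le_dtv[OF fin _ sum_hardcore_gibbs_configs[OF hm1] sum_hardcore_gibbs_configs[OF hm2]];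
        auto)+
  moreover have "lam2 v * (x2 - x1) \<le> lam2 v * ?d"
    using hm2 v \<open>\<bar>x1 - x2\<bar> \<le> ?d\<close> unfolding hardcore_model_def by (intro mult_left_mono) auto
  moreover have "(lam1 v - lam2 v) * x1 = (a1 - a2) + lam2 v * (x2 - x1)"
    using hardcore_prob_spin_plus[OF hm1 v] hardcore_prob_spin_plus[OF hm2 v]
    unfolding a1_def a2_def x1_def x2_def by (simp add: algebra_simps)
  ultimately show ?thesis
    unfolding x1_def[symmetric] by (simp add: algebra_simps abs_le_iff)
qed

lemma hardcore_prob_vacant_pos:
  assumes hm: "hardcore_model V E lam" and v: "v \<in> V"
  shows "(\<Sum>\<sigma>\<in>vacant_nbhd V E v. hardcore_gibbs V E lam \<sigma>) > 0"
proof -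
  have "hardcore_gibbs V E lam (all_minus V) > 0"
    using hc_partition_ge_1[OF hm]
    by (simp add: hardcore_gibbs_def gibbs_def all_minus_in_configs hc_weight_all_minus)
  moreover have "hardcore_gibbs V E lam (all_minus V) \<le> (\<Sum>\<sigma>\<in>vacant_nbhd V E v. hardcore_gibbs V E lam \<sigma>)"
    by (rule member_le_sum)
      (use finite_configs[OF hardcore_model_finite[OF hm]] hardcore_gibbs_nonneg[OF hm] all_minus_in_configs v
        in \<open>auto simp: vacant_nbhd_def all_minus_def\<close>)
  ultimately show ?thesis by linarith
qed

lemma prod_mult_hardcore_prob_vacant_ge_1:
  assumes hm: "hardcore_model V E lam" and v: "v \<in> V"
  shows "1 \<le> (\<Prod>u\<in>insert v {u\<in>V. E v u}. 1 + lam u) * (\<Sum>\<sigma>\<in>vacant_nbhd V E v. hardcore_gibbs V E lam \<sigma>)"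
proof -
  define Z where "Z = (\<Sum>\<sigma>\<in>configs V. hc_weight V E lam \<sigma>)"
  have "Z \<ge> 1" unfolding Z_def by (rule hc_partition_ge_1[OF hm])
  moreover have "Z \<le> (\<Prod>u\<in>insert v {u\<in>V. E v u}. 1 + lam u) * (\<Sum>\<sigma>\<in>vacant_nbhd V E v. hc_weight V E lam \<sigma>)"
    unfolding Z_def vacant_nbhd_def by (rule hc_partition_le_prod[OF hm]) (use v in auto)
  moreover have "(\<Sum>\<sigma>\<in>vacant_nbhd V E v. hardcore_gibbs V E lam \<sigma>) = (\<Sum>\<sigma>\<in>vacant_nbhd V E v. hc_weight V E lam \<sigma>) / Z"
    unfolding Z_def by (rule sum_hardcore_gibbs_eq) (auto simp: vacant_nbhd_def)
  ultimately show ?thesis by (simp add: le_divide_eq)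
qed

lemma lambda_c_nonneg: "D \<ge> 2 \<Longrightarrow> lambda_c D \<ge> 0"
  unfolding lambda_c_def by simp

text \<open>For large D, lambda_c D is about e / D, so (1 + lambda_c D)^(D+2) stays below e^7.\<close>

lemma one_plus_lambda_c_power_le:
  assumes "D \<ge> 7"
  shows "(1 + lambda_c D) ^ (D + 2) \<le> 3 ^ 7"
proof -
  obtain k where D: "D = k + 2" and k: "k \<ge> 5" using assms by (intro that[of "D - 2"]) auto
  define x where "x = real k"
  have x5: "x \<ge> 5" using k x_def by simp
  have "lambda_c D = (x + 1) ^ (k + 1) / x ^ (k + 2)"
    unfolding lambda_c_def D x_def by (simp add: add.commute)
  also have "\<dots> = (1 / x) * (1 + 1 / x) * (1 + 1 / x) ^ k"
    using x5 by (simp add: field_simps power_add power_divide)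
  finally have lc: "lambda_c D = (1 / x) * (1 + 1 / x) * (1 + 1 / x) ^ k" .
  have "(1 + 1 / x) ^ k \<le> exp (1 / x) ^ k"
    by (rule power_mono) (use x5 in auto)
  also have "\<dots> = exp 1" using x5 by (simp add: x_def flip: exp_of_nat_mult)
  finally have "(1 + 1 / x) ^ k \<le> 3" using exp_le by linarith
  then have lc_le: "lambda_c D \<le> (1 / x) * (1 + 1 / x) * 3"
    unfolding lc using x5 by (intro mult_left_mono) auto
  have lc0: "lambda_c D \<ge> 0" using lambda_c_nonneg assms by simp
  have "(x + 4) * ((1 / x) * (1 + 1 / x) * 3) = 3 * (x + 4) * (x + 1) / x ^ 2"
    using x5 by (simp add: field_simps power2_eq_square)
  also have "\<dots> \<le> 7"
  proof -
    have "(x - 5) * (4 * x + 5) \<ge> 0" using x5 by simp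
    then have "3 * (x + 4) * (x + 1) \<le> 7 * x ^ 2" by (simp add: algebra_simps power2_eq_square)
    then show ?thesis using x5 by (simp add: divide_le_eq)
  qed
  finally have exponent: "real (D + 2) * lambda_c D \<le> 7"
    using mult_left_mono[OF lc_le, of "x + 4"] x5 by (simp add: D x_def add.commute)
  have "(1 + lambda_c D) ^ (D + 2) \<le> exp (lambda_c D) ^ (D + 2)"
    by (rule power_mono) (use lc0 in auto)
  also have "\<dots> = exp (real (D + 2) * lambda_c D)" by (simp only: exp_of_nat_mult)
  also have "\<dots> \<le> exp 1 ^ 7" using exponent by (simp flip: exp_of_nat_mult)
  also have "\<dots> \<le> 3 ^ 7" by (rule power_mono) (use exp_le in auto)
  finally show ?thesis .
qed

lemma one_plus_lambda_c_power_le_5000: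
  assumes "D \<ge> 3"
  shows "(1 + lambda_c D) ^ (D + 2) \<le> 5000"
proof -
  consider "D = 3" | "D = 4" | "D = 5" | "D = 6" | "D \<ge> 7" using assms by linarith
  then show ?thesis
  proof cases
    case 5
    then show ?thesis using one_plus_lambda_c_power_le[of D] by simp
  qed (simp_all add: lambda_c_def power_divide)
qed

lemma uniqueness_le_lambda_c:
  assumes "uniqueness V E lam" "max_deg V E \<ge> 3" "v \<in> V"
  shows "lam v \<le> lambda_c (max_deg V E)"
proof -
  obtain \<eta> :: real where "0 < \<eta>" "lam v \<le> (1 - \<eta>) * lambda_c (max_deg V E)"
    using assms unfolding uniqueness_def by auto
  moreover have "\<eta> * lambda_c (max_deg V E) \<ge> 0" using lambda_c_nonneg assms(2) \<open>0 < \<eta>\<close> by simp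
  ultimately show ?thesis by (simp add: algebra_simps)
qed

lemma deg_le_max_deg: "finite V \<Longrightarrow> v \<in> V \<Longrightarrow> deg V E v \<le> max_deg V E"
  unfolding max_deg_def by (rule Max_ge) auto

lemma hardcore_prob_vacant_ge_lambda_c:
  assumes hm: "hardcore_model V E lam" and v: "v \<in> V" and D: "max_deg V E \<ge> 2"
    and le: "\<forall>u\<in>V. lam u \<le> lambda_c (max_deg V E)"
  shows "1 \<le> (1 + lambda_c (max_deg V E)) ^ (max_deg V E + 1)
              * (\<Sum>\<sigma>\<in>vacant_nbhd V E v. hardcore_gibbs V E lam \<sigma>)"
proof -
  let ?N = "insert v {u\<in>V. E v u}" and ?c = "1 + lambda_c (max_deg V E)"
  have sg: "simple_graph V E" using hm unfolding hardcore_model_def by auto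
  have "card ?N = deg V E v + 1"
    using sg simple_graph_finite[OF sg] unfolding deg_def simple_graph_def by simp
  moreover have "(\<Prod>u\<in>?N. 1 + lam u) \<le> (\<Prod>u\<in>?N. ?c)"
    using hm le v by (intro prod_mono) (auto simp: hardcore_model_def)
  ultimately have "(\<Prod>u\<in>?N. 1 + lam u) \<le> ?c ^ (deg V E v + 1)"
    by simp
  also have "\<dots> \<le> ?c ^ (max_deg V E + 1)"
    using deg_le_max_deg[OF simple_graph_finite[OF sg] v] lambda_c_nonneg[OF D] by (intro power_increasing) auto
  finally show ?thesis
    using prod_mult_hardcore_prob_vacant_ge_1[OF hm v] hardcore_prob_vacant_pos[OF hm v]
    by (meson less_imp_le mult_right_mono order.trans)
qed

lemma hardcore_activity_diff_le_uniqueness: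
  assumes hm1: "hardcore_model V E lam1" and hm2: "hardcore_model V E lam2" and v: "v \<in> V"
    and D: "max_deg V E \<ge> 3"
    and le1: "\<forall>u\<in>V. lam1 u \<le> lambda_c (max_deg V E)" and le2: "\<forall>u\<in>V. lam2 u \<le> lambda_c (max_deg V E)"
  shows "lam1 v - lam2 v \<le> 5000 * dtv V (hardcore_gibbs V E lam1) (hardcore_gibbs V E lam2)"
proof (cases "lam1 v \<le> lam2 v")
  case True
  then show ?thesis using dtv_nonneg[of V "hardcore_gibbs V E lam1" "hardcore_gibbs V E lam2"] by simp
next
  case False
  let ?d = "dtv V (hardcore_gibbs V E lam1) (hardcore_gibbs V E lam2)"
  let ?c = "1 + lambda_c (max_deg V E)"
  define x where "x = (\<Sum>\<sigma>\<in>vacant_nbhd V E v. hardcore_gibbs V E lam1 \<sigma>)"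
  have c1: "?c \<ge> 1" using lambda_c_nonneg D by simp
  have "1 \<le> ?c ^ (max_deg V E + 1) * x"
    unfolding x_def using D by (intro hardcore_prob_vacant_ge_lambda_c[OF hm1 v _ le1]) simp
  then have "(lam1 v - lam2 v) * 1 \<le> (lam1 v - lam2 v) * (?c ^ (max_deg V E + 1) * x)"
    using False by (intro mult_left_mono) auto
  then have "lam1 v - lam2 v \<le> ?c ^ (max_deg V E + 1) * ((lam1 v - lam2 v) * x)"
    by (simp add: ac_simps)
  also have "(lam1 v - lam2 v) * x \<le> ?c * ?d"
  proof -
    have "(1 + lam2 v) * ?d \<le> ?c * ?d"
      using le2 v dtv_nonneg[of V "hardcore_gibbs V E lam1"] by (intro mult_right_mono) auto
    with hardcore_activity_diff_le_dtv[OF hm1 hm2 v] show ?thesis unfolding x_def by linarith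
  qed
  then have "?c ^ (max_deg V E + 1) * ((lam1 v - lam2 v) * x) \<le> ?c ^ (max_deg V E + 2) * ?d"
    using c1 by (simp add: mult_left_mono)
  also have "\<dots> \<le> 5000 * ?d"
    using one_plus_lambda_c_power_le_5000[OF D] dtv_nonneg by (rule mult_right_mono)
  finally show ?thesis .
qed

lemma hardcore_prob_nbrs_vacant:
  assumes hm: "hardcore_model V E lam" and v: "v \<in> V"
  shows "(\<Sum>\<sigma>\<in>{\<sigma>\<in>configs V. \<forall>u\<in>{u\<in>V. E v u}. \<sigma> u = -1}. hardcore_gibbs V E lam \<sigma>)
       = (\<Sum>\<sigma>\<in>vacant_nbhd V E v. hardcore_gibbs V E lam \<sigma>)
         + (\<Sum>\<sigma>\<in>{\<sigma>\<in>configs V. \<sigma> v = 1}. hardcore_gibbs V E lam \<sigma>)"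
proof -
  let ?\<mu> = "hardcore_gibbs V E lam"
  let ?occ = "{\<sigma>\<in>configs V. (\<forall>u\<in>{u\<in>V. E v u}. \<sigma> u = -1) \<and> \<sigma> v = 1}"
  have fin: "finite (configs V)" using finite_configs hardcore_model_finite[OF hm] by blast
  have "{\<sigma>\<in>configs V. \<forall>u\<in>{u\<in>V. E v u}. \<sigma> u = -1} = vacant_nbhd V E v \<union> ?occ"
    using v unfolding vacant_nbhd_def configs_def by auto
  then have "(\<Sum>\<sigma>\<in>{\<sigma>\<in>configs V. \<forall>u\<in>{u\<in>V. E v u}. \<sigma> u = -1}. ?\<mu> \<sigma>)
      = (\<Sum>\<sigma>\<in>vacant_nbhd V E v. ?\<mu> \<sigma>) + (\<Sum>\<sigma>\<in>?occ. ?\<mu> \<sigma>)"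
    using fin by (simp add: sum.union_disjoint vacant_nbhd_def disjoint_iff)
  also have "(\<Sum>\<sigma>\<in>?occ. ?\<mu> \<sigma>) = (\<Sum>\<sigma>\<in>{\<sigma>\<in>configs V. \<sigma> v = 1}. ?\<mu> \<sigma>)"
  proof (rule sum.mono_neutral_left)
    show "\<forall>\<sigma>\<in>{\<sigma>\<in>configs V. \<sigma> v = 1} - ?occ. ?\<mu> \<sigma> = 0"
    proof
      fix \<sigma> assume \<sigma>: "\<sigma> \<in> {\<sigma>\<in>configs V. \<sigma> v = 1} - ?occ"
      then obtain u where "u \<in> V" "E v u" "\<sigma> u = 1" using configs_spin by fastforce
      then show "?\<mu> \<sigma> = 0"
        using \<sigma> v hc_weight_eq_0[of v V u E \<sigma> lam] by (simp add: hardcore_gibbs_def gibbs_def)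
    qed
  qed (use fin in auto)
  finally show ?thesis .
qed

text \<open>Marginal boundedness at the empty condition gives b \<le> mu(v occupied), and conditioned on
  the neighbours of v being vacant it gives b mu(N(v) vacant) \<le> mu(v and N(v) vacant).\<close>

lemma hardcore_marg_bounded_vacant:
  assumes hm: "hardcore_model V E lam" and mb: "marg_bounded V (hardcore_gibbs V E lam) b"
    and b: "0 \<le> b" and v: "v \<in> V" and lam: "lam v > 0"
  shows "b\<^sup>2 \<le> (\<Sum>\<sigma>\<in>vacant_nbhd V E v. hardcore_gibbs V E lam \<sigma>)" and "b * (1 + lam v) \<le> 1"
proof -
  let ?\<mu> = "hardcore_gibbs V E lam"
  let ?N = "{u\<in>V. E v u}"
  define x where "x = (\<Sum>\<sigma>\<in>vacant_nbhd V E v. ?\<mu> \<sigma>)"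
  define a where "a = (\<Sum>\<sigma>\<in>{\<sigma>\<in>configs V. \<sigma> v = 1}. ?\<mu> \<sigma>)"
  have fin: "finite V" by (rule hardcore_model_finite[OF hm])
  have nonneg: "\<And>\<tau>. \<tau> \<in> configs V \<Longrightarrow> ?\<mu> \<tau> \<ge> 0" using hardcore_gibbs_nonneg[OF hm] by blast
  have x: "x > 0" unfolding x_def by (rule hardcore_prob_vacant_pos[OF hm v])
  have a: "a = lam v * x" unfolding a_def x_def by (rule hardcore_prob_spin_plus[OF hm v])
  with x lam have "a > 0" by simp
  have "b * prob_ev V ?\<mu> (\<lambda>\<tau>. \<forall>u\<in>{}. \<tau> u = all_minus V u)
      \<le> prob_ev V ?\<mu> (\<lambda>\<tau>. (\<forall>u\<in>{}. \<tau> u = all_minus V u) \<and> \<tau> v = 1)"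
    by (rule marg_boundedD[OF mb fin nonneg]) (use v \<open>a > 0\<close> in \<open>simp_all add: prob_ev_def a_def\<close>)
  then have "b \<le> a"
    using sum_hardcore_gibbs_configs[OF hm] by (simp add: prob_ev_def a_def)
  have nbrs: "{\<tau>\<in>configs V. \<forall>u\<in>?N. \<tau> u = all_minus V u} = {\<tau>\<in>configs V. \<forall>u\<in>?N. \<tau> u = -1}"
    by (auto simp: all_minus_def)
  have "b * prob_ev V ?\<mu> (\<lambda>\<tau>. \<forall>u\<in>?N. \<tau> u = all_minus V u)
      \<le> prob_ev V ?\<mu> (\<lambda>\<tau>. (\<forall>u\<in>?N. \<tau> u = all_minus V u) \<and> \<tau> v = -1)"
    by (rule marg_boundedD[OF mb fin nonneg])
      (use v x in \<open>auto simp: prob_ev_def x_def vacant_nbhd_def all_minus_def conj_commute\<close>)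
  then have "b * (x + a) \<le> x"
    using hardcore_prob_nbrs_vacant[OF hm v] nbrs
    by (simp add: prob_ev_def x_def a_def vacant_nbhd_def all_minus_def conj_commute)
  moreover have "b\<^sup>2 \<le> b * (x + a)"
    using \<open>b \<le> a\<close> x b mult_left_mono[of b "x + a" b] unfolding power2_eq_square by auto
  ultimately show "b\<^sup>2 \<le> x" unfolding x_def by linarith
  have "(b * (1 + lam v)) * x \<le> 1 * x" using \<open>b * (x + a) \<le> x\<close> a by (simp add: algebra_simps)
  with x show "b * (1 + lam v) \<le> 1" by (simp only: mult_le_cancel_right_pos)
qed

lemma hardcore_activity_diff_le_marg_bounded:
  assumes hm1: "hardcore_model V E lam1" and hm2: "hardcore_model V E lam2" and b: "0 < b"
    and mb: "marg_bounded V (hardcore_gibbs V E lam1) b" and v: "v \<in> V" and le: "lam2 v \<le> lam1 v"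
  shows "b ^ 3 * (lam1 v - lam2 v) \<le> dtv V (hardcore_gibbs V E lam1) (hardcore_gibbs V E lam2)"
proof (cases "lam1 v = lam2 v")
  case True
  then show ?thesis using dtv_nonneg by simp
next
  case False
  let ?d = "dtv V (hardcore_gibbs V E lam1) (hardcore_gibbs V E lam2)"
  define x where "x = (\<Sum>\<sigma>\<in>vacant_nbhd V E v. hardcore_gibbs V E lam1 \<sigma>)"
  have "lam2 v \<ge> 0" using hm2 v unfolding hardcore_model_def by auto
  with le False have lam1: "lam1 v > 0" by simp
  note vacant = hardcore_marg_bounded_vacant[OF hm1 mb less_imp_le[OF b] v lam1, folded x_def]
  have "b ^ 3 * (lam1 v - lam2 v) = (b * (lam1 v - lam2 v)) * b\<^sup>2"
    by (simp add: power2_eq_square power3_eq_cube)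
  also have "\<dots> \<le> (b * (lam1 v - lam2 v)) * x"
    using vacant(1) b le by (intro mult_left_mono) auto
  also have "\<dots> \<le> b * ((1 + lam2 v) * ?d)"
    using hardcore_activity_diff_le_dtv[OF hm1 hm2 v, folded x_def] b by simp
  also have "\<dots> \<le> (b * (1 + lam1 v)) * ?d"
    using b le dtv_nonneg[of V "hardcore_gibbs V E lam1" "hardcore_gibbs V E lam2"]
    by (simp add: mult_right_mono algebra_simps)
  also have "\<dots> \<le> ?d"
    using vacant(2) b lam1 dtv_nonneg[of V "hardcore_gibbs V E lam1" "hardcore_gibbs V E lam2"]
    by (intro mult_left_le_one_le) auto
  finally show ?thesis .
qed

section \<open>Soft Ising model\<close>

definition local_field ::
  "'v set \<Rightarrow> ('v \<Rightarrow> 'v \<Rightarrow> bool) \<Rightarrow> ('v \<Rightarrow> 'v \<Rightarrow> real) \<Rightarrow> ('v \<Rightarrow> real) \<Rightarrow> 'v \<Rightarrow> ('v \<Rightarrow> int) \<Rightarrow> real"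
  where "local_field V E J h v \<sigma> = h v + (\<Sum>x\<in>{u\<in>V. E v u}. J v x * of_int (\<sigma> x))"

lemma local_field_flip:
  "simple_graph V E \<Longrightarrow> local_field V E J h v (flip v \<sigma>) = local_field V E J h v \<sigma>"
  unfolding local_field_def simple_graph_def by (auto simp: flip_apply intro!: sum.cong)

lemma local_field_diff_flip_nbr:
  assumes sg: "simple_graph V E" and u: "u \<in> V" "E v u"
  shows "local_field V E J h v \<sigma> - local_field V E J h v (flip u \<sigma>) = 2 * J v u * of_int (\<sigma> u)"
proof -
  have "local_field V E J h v \<sigma> - local_field V E J h v (flip u \<sigma>)
      = (\<Sum>x\<in>{x\<in>V. E v x}. J v x * of_int (\<sigma> x) - J v x * of_int (flip u \<sigma> x))"
    unfolding local_field_def by (simp add: sum_subtractf)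
  also have "\<dots> = (\<Sum>x\<in>{x\<in>V. E v x}. if x = u then 2 * J v u * of_int (\<sigma> u) else 0)"
    by (rule sum.cong) (auto simp: flip_apply)
  also have "\<dots> = 2 * J v u * of_int (\<sigma> u)"
    using simple_graph_finite[OF sg] u by (simp add: sum.delta)
  finally show ?thesis .
qed

text \<open>Each unordered edge at v appears twice in the ordered double sum, hence the factor 4.\<close>

lemma pair_sum_diff_flip:
  fixes J :: "'v \<Rightarrow> 'v \<Rightarrow> real"
  assumes sg: "simple_graph V E" and J: "\<forall>a b. J a b = J b a" and v: "v \<in> V"
  shows "(\<Sum>u\<in>V. \<Sum>x\<in>{x\<in>V. E u x}. J u x * of_int (\<sigma> u) * of_int (\<sigma> x))
       - (\<Sum>u\<in>V. \<Sum>x\<in>{x\<in>V. E u x}. J u x * of_int (flip v \<sigma> u) * of_int (flip v \<sigma> x))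
       = 4 * of_int (\<sigma> v) * (\<Sum>x\<in>{x\<in>V. E v x}. J v x * of_int (\<sigma> x))"
proof -
  let ?r = "\<lambda>x. real_of_int (\<sigma> x)" and ?r' = "\<lambda>x. real_of_int (flip v \<sigma> x)"
  let ?N = "\<lambda>u. {x\<in>V. E u x}"
  define S where "S = (\<Sum>x\<in>?N v. J v x * ?r x)"
  have fin: "finite V" using simple_graph_finite[OF sg] .
  have irr: "\<And>x. \<not> E x x" and sym: "\<And>a b. E a b \<Longrightarrow> E b a" using sg unfolding simple_graph_def by auto
  have r': "\<And>x. ?r' x = (if x = v then - ?r v else ?r x)" by (simp add: flip_apply)
  have summand: "J u x * ?r u * ?r x - J u x * ?r' u * ?r' x
      = 2 * ?r v * ((if u = v then J v x * ?r x else 0) + (if x = v then J u v * ?r u else 0))"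
    if "x \<in> ?N u" for u x
    using that irr r' by (cases "u = v"; cases "x = v") (auto simp: algebra_simps)
  have "(\<Sum>u\<in>V. \<Sum>x\<in>?N u. if u = v then J v x * ?r x else 0) = (\<Sum>u\<in>V. if u = v then S else 0)"
    by (rule sum.cong) (auto simp: S_def)
  then have out: "(\<Sum>u\<in>V. \<Sum>x\<in>?N u. if u = v then J v x * ?r x else 0) = S"
    using fin v by simp
  have "(\<Sum>u\<in>V. \<Sum>x\<in>?N u. if x = v then J u v * ?r u else 0) = (\<Sum>u\<in>V. if E v u then J v u * ?r u else 0)"
  proof (rule sum.cong[OF refl])
    fix u assume "u \<in> V"
    then show "(\<Sum>x\<in>?N u. if x = v then J u v * ?r u else 0) = (if E v u then J v u * ?r u else 0)"
      using fin v sym J by (auto simp: sum.delta')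
  qed
  also have "\<dots> = S" unfolding S_def using fin by (simp add: sum.inter_filter)
  finally have into: "(\<Sum>u\<in>V. \<Sum>x\<in>?N u. if x = v then J u v * ?r u else 0) = S" .
  have "(\<Sum>u\<in>V. \<Sum>x\<in>?N u. J u x * ?r u * ?r x) - (\<Sum>u\<in>V. \<Sum>x\<in>?N u. J u x * ?r' u * ?r' x)
      = (\<Sum>u\<in>V. \<Sum>x\<in>?N u. J u x * ?r u * ?r x - J u x * ?r' u * ?r' x)"
    by (simp add: sum_subtractf)
  also have "\<dots> = (\<Sum>u\<in>V. \<Sum>x\<in>?N u. 2 * ?r v * ((if u = v then J v x * ?r x else 0) + (if x = v then J u v * ?r u else 0)))"
    by (intro sum.cong refl summand) auto
  also have "\<dots> = 2 * ?r v * (\<Sum>u\<in>V. \<Sum>x\<in>?N u. if u = v then J v x * ?r x else 0)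
                + 2 * ?r v * (\<Sum>u\<in>V. \<Sum>x\<in>?N u. if x = v then J u v * ?r u else 0)"
    by (simp add: sum.distrib sum_distrib_left distrib_left)
  finally show ?thesis unfolding out into S_def by simp
qed

lemma ising_weight_flip:
  assumes sg: "simple_graph V E" and J: "\<forall>a b. J a b = J b a" and v: "v \<in> V"
  shows "ising_weight V E J h \<sigma>
       = exp (2 * of_int (\<sigma> v) * local_field V E J h v \<sigma>) * ising_weight V E J h (flip v \<sigma>)"
proof -
  let ?r = "\<lambda>x. real_of_int (\<sigma> x)" and ?r' = "\<lambda>x. real_of_int (flip v \<sigma> x)"
  have "(\<Sum>u\<in>V. h u * ?r u) - (\<Sum>u\<in>V. h u * ?r' u) = (\<Sum>u\<in>V. if u = v then 2 * ?r v * h v else 0)"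
    unfolding sum_subtractf[symmetric] by (rule sum.cong) (auto simp: flip_apply)
  also have "\<dots> = 2 * ?r v * h v" using simple_graph_finite[OF sg] v by simp
  finally show ?thesis
    using pair_sum_diff_flip[OF sg J v, of \<sigma>]
    unfolding ising_weight_def local_field_def by (simp add: algebra_simps flip: exp_add)
qed

lemma soft_ising_model_finite: "soft_ising_model V E J h \<Longrightarrow> finite V"
  unfolding soft_ising_model_def simple_graph_def by auto

lemma ising_weight_pos: "ising_weight V E J h \<sigma> > 0"
  unfolding ising_weight_def by simp

lemma ising_partition_pos: "finite V \<Longrightarrow> (\<Sum>\<tau>\<in>configs V. ising_weight V E J h \<tau>) > 0"
  by (rule sum_pos2[OF finite_configs all_minus_in_configs]) (auto intro: less_imp_le ising_weight_pos)

lemma ising_gibbs_pos: "finite V \<Longrightarrow> \<sigma> \<in> configs V \<Longrightarrow> ising_gibbs V E J h \<sigma> > 0"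
  unfolding ising_gibbs_def gibbs_def by (simp add: ising_partition_pos ising_weight_pos)

lemma ising_gibbs_nonneg: "ising_gibbs V E J h \<sigma> \<ge> 0"
  unfolding ising_gibbs_def by (rule gibbs_nonneg) (rule less_imp_le[OF ising_weight_pos])

lemma sum_ising_gibbs_configs:
  assumes "finite V"
  shows "(\<Sum>\<sigma>\<in>configs V. ising_gibbs V E J h \<sigma>) = 1"
  unfolding ising_gibbs_def using ising_partition_pos[OF assms, of E J h] by (intro sum_gibbs_configs) simp

lemma exp_mult_one_minus_tanh:
  fixes s L :: real
  assumes "s = 1 \<or> s = -1"
  shows "exp (2 * s * L) * (1 - s * tanh L) = 1 + s * tanh L"
proof -
  define e where "e = exp (- 2 * L)"
  have e: "e > 0" "exp (2 * L) = 1 / e" unfolding e_def by (simp_all add: exp_minus inverse_eq_divide)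
  have t: "tanh L = (1 - e) / (1 + e)" unfolding e_def by (rule tanh_real_altdef)
  have "exp (2 * s * L) = (if s = 1 then 1 / e else e)"
    using assms e(2) unfolding e_def by auto
  with assms e(1) show ?thesis by (auto simp: t field_simps)
qed

text \<open>The conditional law of the spin at v given all other spins has mean tanh of the local field.\<close>

lemma ising_gibbs_detailed_balance:
  assumes sm: "soft_ising_model V E J h" and \<sigma>: "\<sigma> \<in> configs V" and v: "v \<in> V"
  shows "ising_gibbs V E J h \<sigma> * (1 - of_int (\<sigma> v) * tanh (local_field V E J h v \<sigma>))
       = ising_gibbs V E J h (flip v \<sigma>) * (1 + of_int (\<sigma> v) * tanh (local_field V E J h v \<sigma>))"
proof -
  have sg: "simple_graph V E" and J: "\<forall>a b. J a b = J b a" using sm unfolding soft_ising_model_def by auto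
  let ?L = "local_field V E J h v \<sigma>" and ?s = "real_of_int (\<sigma> v)"
  let ?Z = "\<Sum>\<tau>\<in>configs V. ising_weight V E J h \<tau>"
  have "ising_gibbs V E J h \<sigma> * (1 - ?s * tanh ?L)
      = ising_weight V E J h (flip v \<sigma>) / ?Z * (exp (2 * ?s * ?L) * (1 - ?s * tanh ?L))"
    using ising_weight_flip[OF sg J v, of h \<sigma>] \<sigma> by (simp add: ising_gibbs_def gibbs_def)
  also have "\<dots> = ising_gibbs V E J h (flip v \<sigma>) * (1 + ?s * tanh ?L)"
    using exp_mult_one_minus_tanh[of ?s ?L] configs_spin[OF \<sigma> v] flip_in_configs[OF \<sigma> v]
    by (auto simp: ising_gibbs_def gibbs_def)
  finally show ?thesis .
qed

lemma ising_spin_expectation_eq_tanh: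
  assumes sm: "soft_ising_model V E J h" and v: "v \<in> V"
    and f: "\<And>\<sigma>. \<sigma> \<in> configs V \<Longrightarrow> f (flip v \<sigma>) = f \<sigma>"
  shows "(\<Sum>\<sigma>\<in>configs V. ising_gibbs V E J h \<sigma> * of_int (\<sigma> v) * f \<sigma>)
       = (\<Sum>\<sigma>\<in>configs V. ising_gibbs V E J h \<sigma> * tanh (local_field V E J h v \<sigma>) * f \<sigma>)"
proof -
  have sg: "simple_graph V E" using sm unfolding soft_ising_model_def by auto
  let ?\<mu> = "ising_gibbs V E J h"
  define G where "G = (\<lambda>\<sigma>. ?\<mu> \<sigma> * (of_int (\<sigma> v) - tanh (local_field V E J h v \<sigma>)) * f \<sigma>)"
  have antisym: "G \<sigma> + G (flip v \<sigma>) = 0" if \<sigma>: "\<sigma> \<in> configs V" for \<sigma>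
  proof -
    let ?s = "real_of_int (\<sigma> v)" and ?t = "tanh (local_field V E J h v \<sigma>)"
    have "G \<sigma> + G (flip v \<sigma>) = f \<sigma> * (?\<mu> \<sigma> * (?s - ?t) - ?\<mu> (flip v \<sigma>) * (?s + ?t))"
      unfolding G_def using f[OF \<sigma>] local_field_flip[OF sg] by (simp add: flip_apply algebra_simps)
    also have "?\<mu> \<sigma> * (?s - ?t) - ?\<mu> (flip v \<sigma>) * (?s + ?t)
        = ?s * (?\<mu> \<sigma> * (1 - ?s * ?t) - ?\<mu> (flip v \<sigma>) * (1 + ?s * ?t))"
      using configs_spin[OF \<sigma> v] by (auto simp: algebra_simps)
    finally show ?thesis using ising_gibbs_detailed_balance[OF sm \<sigma> v] by simp
  qed
  have "2 * (\<Sum>\<sigma>\<in>configs V. G \<sigma>) = (\<Sum>\<sigma>\<in>configs V. G \<sigma> + G (flip v \<sigma>))"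
    using sum_configs_flip[OF v, of G] by (simp add: sum.distrib)
  also have "\<dots> = 0" using antisym by simp
  finally show ?thesis unfolding G_def by (simp add: algebra_simps sum_subtractf)
qed

lemma ising_gibbs_ge_marg_bounded:
  assumes sm: "soft_ising_model V E J h" and mb: "marg_bounded V (ising_gibbs V E J h) b"
    and \<sigma>: "\<sigma> \<in> configs V" and v: "v \<in> V"
  shows "b * (ising_gibbs V E J h \<sigma> + ising_gibbs V E J h (flip v \<sigma>)) \<le> ising_gibbs V E J h \<sigma>"
proof -
  let ?\<mu> = "ising_gibbs V E J h"
  have fin: "finite V" by (rule soft_ising_model_finite[OF sm])
  have rest: "{\<tau>\<in>configs V. \<forall>u\<in>V - {v}. \<tau> u = \<sigma> u} = {\<sigma>, flip v \<sigma>}"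
  proof (intro equalityI subsetI)
    fix \<tau> assume \<tau>: "\<tau> \<in> {\<tau>\<in>configs V. \<forall>u\<in>V - {v}. \<tau> u = \<sigma> u}"
    then have "\<tau> v = \<sigma> v \<or> \<tau> v = - \<sigma> v" using configs_spin[of \<tau> V v] configs_spin[OF \<sigma> v] v by auto
    moreover have "\<tau> x = \<sigma> x" if "x \<noteq> v" for x
      using \<tau> \<sigma> that unfolding configs_def by (cases "x \<in> V") auto
    ultimately have "\<tau> = \<sigma> \<or> \<tau> = flip v \<sigma>" unfolding fun_eq_iff flip_apply by metis
    then show "\<tau> \<in> {\<sigma>, flip v \<sigma>}" by simp
  qed (use \<sigma> flip_in_configs[OF \<sigma> v] in \<open>auto simp: flip_apply split: if_splits\<close>)
  then have "{\<tau>\<in>configs V. (\<forall>u\<in>V - {v}. \<tau> u = \<sigma> u) \<and> \<tau> v = \<sigma> v} = {\<sigma>}"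
    using configs_spin[OF \<sigma> v] by (auto simp: flip_apply)
  moreover have "b * prob_ev V ?\<mu> (\<lambda>\<tau>. \<forall>u\<in>V - {v}. \<tau> u = \<sigma> u)
      \<le> prob_ev V ?\<mu> (\<lambda>\<tau>. (\<forall>u\<in>V - {v}. \<tau> u = \<sigma> u) \<and> \<tau> v = \<sigma> v)"
    using \<sigma> v configs_spin[OF \<sigma>] ising_gibbs_pos[OF fin \<sigma>] ising_gibbs_nonneg \<open>_ = {\<sigma>}\<close>
    by (intro marg_boundedD[OF mb fin]) (auto simp: prob_ev_def)
  ultimately show ?thesis using rest flip_neq[OF \<sigma> v] by (simp add: prob_ev_def)
qed

lemma abs_tanh_local_field_le:
  assumes sm: "soft_ising_model V E J h" and mb: "marg_bounded V (ising_gibbs V E J h) b"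
    and \<sigma>: "\<sigma> \<in> configs V" and v: "v \<in> V"
  shows "\<bar>tanh (local_field V E J h v \<sigma>)\<bar> \<le> 1 - 2 * b"
proof -
  let ?s = "real_of_int (\<sigma> v)" and ?t = "tanh (local_field V E J h v \<sigma>)"
  let ?a = "ising_gibbs V E J h \<sigma>" and ?c = "ising_gibbs V E J h (flip v \<sigma>)"
  have fin: "finite V" by (rule soft_ising_model_finite[OF sm])
  have balance: "?a * (1 - ?s * ?t) = ?c * (1 + ?s * ?t)" by (rule ising_gibbs_detailed_balance[OF sm \<sigma> v])
  have "b * (?a + ?c) \<le> ?a" by (rule ising_gibbs_ge_marg_bounded[OF sm mb \<sigma> v])
  moreover have "b * (?c + ?a) \<le> ?c"
    using ising_gibbs_ge_marg_bounded[OF sm mb flip_in_configs[OF \<sigma> v] v] by simp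
  moreover have "2 * ?a = (1 + ?s * ?t) * (?a + ?c)" "2 * ?c = (1 - ?s * ?t) * (?a + ?c)"
    using balance by (simp_all add: algebra_simps)
  ultimately have "2 * b * (?a + ?c) \<le> (1 + ?s * ?t) * (?a + ?c)" "2 * b * (?a + ?c) \<le> (1 - ?s * ?t) * (?a + ?c)"
    by (simp_all add: algebra_simps)
  moreover have "?a + ?c > 0"
    using ising_gibbs_pos[OF fin \<sigma>, of E J h] ising_gibbs_pos[OF fin flip_in_configs[OF \<sigma> v], of E J h] by simp
  ultimately have "2 * b \<le> 1 + ?s * ?t" "2 * b \<le> 1 - ?s * ?t" by (simp_all add: mult_le_cancel_right_pos)
  moreover have "\<bar>?s * ?t\<bar> = \<bar>?t\<bar>" using abs_spin[OF \<sigma> v] by (simp add: abs_mult)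
  ultimately show ?thesis by linarith
qed

lemma marg_bounded_ising_le_half:
  assumes sm: "soft_ising_model V E J h" and mb: "marg_bounded V (ising_gibbs V E J h) b" and v: "v \<in> V"
  shows "2 * b \<le> 1"
  using abs_tanh_local_field_le[OF sm mb all_minus_in_configs v] by linarith

lemma tanh_diff_ge:
  fixes x y c :: real
  assumes x: "\<bar>tanh x\<bar> \<le> c" and y: "\<bar>tanh y\<bar> \<le> c"
  shows "(1 - c\<^sup>2) * \<bar>x - y\<bar> \<le> \<bar>tanh x - tanh y\<bar>"
proof -
  have dtanh: "(tanh has_real_derivative 1 - tanh z ^ 2) (at z)" for z :: real
    using has_field_derivative_tanh[OF cosh_real_nonzero[of z] DERIV_ident] by simp
  have mvt: "(1 - c\<^sup>2) * (q - p) \<le> tanh q - tanh p"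
    if pq: "p < q" "\<bar>tanh p\<bar> \<le> c" "\<bar>tanh q\<bar> \<le> c" for p q :: real
  proof -
    obtain z where z: "p < z" "z < q" "tanh q - tanh p = (q - p) * (1 - tanh z ^ 2)"
      using MVT2[OF pq(1), of tanh "\<lambda>z. 1 - tanh z ^ 2"] dtanh by blast
    have "tanh p < tanh z" "tanh z < tanh q" using z by auto
    then have "\<bar>tanh z\<bar> \<le> c" using pq(2,3) unfolding abs_le_iff by linarith
    then have "tanh z ^ 2 \<le> c\<^sup>2" by (metis abs_ge_zero power2_abs power_mono)
    then show ?thesis using z(3) pq(1) by (simp add: mult_right_mono mult.commute)
  qed
  show ?thesis
  proof (cases x y rule: linorder_cases)
    case less
    then show ?thesis using mvt[OF less x y] by (simp add: abs_if)
  next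
    case greater
    then show ?thesis using mvt[OF greater y x] by (simp add: abs_if)
  qed simp
qed

text \<open>Test the two Gibbs measures against sigma_v s and tanh(L2) s, where s is the sign of
  tanh(L1) - tanh(L2); the Glauber identity turns the first test into one against tanh(Li) s.\<close>

lemma ising_expected_tanh_diff_le_dtv:
  assumes sm1: "soft_ising_model V E J1 h1" and sm2: "soft_ising_model V E J2 h2" and v: "v \<in> V"
  shows "(\<Sum>\<sigma>\<in>configs V. ising_gibbs V E J1 h1 \<sigma>
            * \<bar>tanh (local_field V E J1 h1 v \<sigma>) - tanh (local_field V E J2 h2 v \<sigma>)\<bar>)
       \<le> 4 * dtv V (ising_gibbs V E J1 h1) (ising_gibbs V E J2 h2)"
proof -
  let ?\<mu>1 = "ising_gibbs V E J1 h1" and ?\<mu>2 = "ising_gibbs V E J2 h2"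
  let ?t1 = "\<lambda>\<sigma>. tanh (local_field V E J1 h1 v \<sigma>)" and ?t2 = "\<lambda>\<sigma>. tanh (local_field V E J2 h2 v \<sigma>)"
  let ?d = "dtv V ?\<mu>1 ?\<mu>2"
  define s where "s = (\<lambda>\<sigma>. sgn (?t1 \<sigma> - ?t2 \<sigma>))"
  have sg: "simple_graph V E" using sm1 unfolding soft_ising_model_def by auto
  have s_flip: "\<And>\<sigma>. \<sigma> \<in> configs V \<Longrightarrow> s (flip v \<sigma>) = s \<sigma>"
    unfolding s_def using local_field_flip[OF sg] by simp
  have s_le: "\<bar>s \<sigma>\<bar> \<le> 1" for \<sigma> unfolding s_def by (simp add: abs_sgn_eq)
  have glauber1: "(\<Sum>\<sigma>\<in>configs V. ?\<mu>1 \<sigma> * ?t1 \<sigma> * s \<sigma>) = (\<Sum>\<sigma>\<in>configs V. ?\<mu>1 \<sigma> * of_int (\<sigma> v) * s \<sigma>)"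
    by (rule ising_spin_expectation_eq_tanh[where f = s, OF sm1 v s_flip, symmetric])
  have glauber2: "(\<Sum>\<sigma>\<in>configs V. ?\<mu>2 \<sigma> * of_int (\<sigma> v) * s \<sigma>) = (\<Sum>\<sigma>\<in>configs V. ?\<mu>2 \<sigma> * ?t2 \<sigma> * s \<sigma>)"
    by (rule ising_spin_expectation_eq_tanh[where f = s, OF sm2 v s_flip])
  have spin_test: "\<bar>\<Sum>\<sigma>\<in>configs V. (?\<mu>1 \<sigma> - ?\<mu>2 \<sigma>) * (of_int (\<sigma> v) * s \<sigma>)\<bar> \<le> 2 * ?d"
    by (rule abs_sum_diff_mult_le_dtv) (use abs_spin[OF _ v] s_le in \<open>auto simp: abs_mult\<close>)
  have tanh_test: "\<bar>\<Sum>\<sigma>\<in>configs V. (?\<mu>1 \<sigma> - ?\<mu>2 \<sigma>) * (?t2 \<sigma> * s \<sigma>)\<bar> \<le> 2 * ?d"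
  proof (rule abs_sum_diff_mult_le_dtv)
    fix \<sigma>
    have "\<bar>?t2 \<sigma>\<bar> \<le> 1" using tanh_real_bounds[of "local_field V E J2 h2 v \<sigma>"] by (simp add: abs_le_iff)
    then show "\<bar>?t2 \<sigma> * s \<sigma>\<bar> \<le> 1" using s_le[of \<sigma>] by (simp add: abs_mult mult_le_one)
  qed
  have "(\<Sum>\<sigma>\<in>configs V. ?\<mu>1 \<sigma> * \<bar>?t1 \<sigma> - ?t2 \<sigma>\<bar>)
      = (\<Sum>\<sigma>\<in>configs V. ?\<mu>1 \<sigma> * ?t1 \<sigma> * s \<sigma>) - (\<Sum>\<sigma>\<in>configs V. ?\<mu>1 \<sigma> * ?t2 \<sigma> * s \<sigma>)"
    unfolding sum_subtractf[symmetric] by (rule sum.cong) (simp_all add: s_def abs_sgn algebra_simps)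
  also have "\<dots> = (\<Sum>\<sigma>\<in>configs V. (?\<mu>1 \<sigma> - ?\<mu>2 \<sigma>) * (of_int (\<sigma> v) * s \<sigma>))
                 - (\<Sum>\<sigma>\<in>configs V. (?\<mu>1 \<sigma> - ?\<mu>2 \<sigma>) * (?t2 \<sigma> * s \<sigma>))"
    unfolding glauber1 using glauber2 by (simp add: sum_subtractf left_diff_distrib mult.assoc)
  finally show ?thesis using spin_test tanh_test by linarith
qed

text \<open>Marginal boundedness keeps both tanh values in [2b - 1, 1 - 2b], where tanh has slope
  at least 4b(1 - b) \<ge> 2b.\<close>

lemma ising_expected_field_diff_le_dtv:
  assumes sm1: "soft_ising_model V E J1 h1" and sm2: "soft_ising_model V E J2 h2"
    and mb1: "marg_bounded V (ising_gibbs V E J1 h1) b" and mb2: "marg_bounded V (ising_gibbs V E J2 h2) b"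
    and b: "0 < b" and v: "v \<in> V"
  shows "b * (\<Sum>\<sigma>\<in>configs V. ising_gibbs V E J1 h1 \<sigma>
            * \<bar>local_field V E J1 h1 v \<sigma> - local_field V E J2 h2 v \<sigma>\<bar>)
       \<le> 2 * dtv V (ising_gibbs V E J1 h1) (ising_gibbs V E J2 h2)"
proof -
  let ?\<mu>1 = "ising_gibbs V E J1 h1"
  let ?L1 = "local_field V E J1 h1 v" and ?L2 = "local_field V E J2 h2 v"
  have "2 * b \<le> 1" by (rule marg_bounded_ising_le_half[OF sm1 mb1 v])
  have slope: "2 * b * \<bar>?L1 \<sigma> - ?L2 \<sigma>\<bar> \<le> \<bar>tanh (?L1 \<sigma>) - tanh (?L2 \<sigma>)\<bar>" if \<sigma>: "\<sigma> \<in> configs V" for \<sigma>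
  proof -
    have "(1 - (1 - 2 * b)\<^sup>2) * \<bar>?L1 \<sigma> - ?L2 \<sigma>\<bar> \<le> \<bar>tanh (?L1 \<sigma>) - tanh (?L2 \<sigma>)\<bar>"
      by (rule tanh_diff_ge[OF abs_tanh_local_field_le[OF sm1 mb1 \<sigma> v] abs_tanh_local_field_le[OF sm2 mb2 \<sigma> v]])
    moreover have "2 * b \<le> 1 - (1 - 2 * b)\<^sup>2"
      using b \<open>2 * b \<le> 1\<close> by (simp add: power2_eq_square algebra_simps)
    ultimately show ?thesis by (meson abs_ge_zero mult_right_mono order.trans)
  qed
  have "2 * (b * (\<Sum>\<sigma>\<in>configs V. ?\<mu>1 \<sigma> * \<bar>?L1 \<sigma> - ?L2 \<sigma>\<bar>))
      = (\<Sum>\<sigma>\<in>configs V. ?\<mu>1 \<sigma> * (2 * b * \<bar>?L1 \<sigma> - ?L2 \<sigma>\<bar>))"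
    by (simp add: sum_distrib_left algebra_simps)
  also have "\<dots> \<le> (\<Sum>\<sigma>\<in>configs V. ?\<mu>1 \<sigma> * \<bar>tanh (?L1 \<sigma>) - tanh (?L2 \<sigma>)\<bar>)"
    by (intro sum_mono mult_left_mono slope ising_gibbs_nonneg)
  also have "\<dots> \<le> 4 * dtv V ?\<mu>1 (ising_gibbs V E J2 h2)"
    by (rule ising_expected_tanh_diff_le_dtv[OF sm1 sm2 v])
  finally show ?thesis by simp
qed

lemma coupling_diff_le_field_diff_flip_nbr:
  assumes sg: "simple_graph V E" and u: "u \<in> V" "E v u" and \<sigma>: "\<sigma> \<in> configs V"
  shows "2 * \<bar>J1 v u - J2 v u\<bar>
       \<le> \<bar>local_field V E J1 h1 v \<sigma> - local_field V E J2 h2 v \<sigma>\<bar>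
         + \<bar>local_field V E J1 h1 v (flip u \<sigma>) - local_field V E J2 h2 v (flip u \<sigma>)\<bar>"
proof -
  have "2 * \<bar>J1 v u - J2 v u\<bar> = \<bar>2 * (J1 v u - J2 v u) * of_int (\<sigma> u)\<bar>"
    using abs_spin[OF \<sigma> u(1)] by (simp only: abs_mult abs_numeral mult_1_right)
  also have "2 * (J1 v u - J2 v u) * of_int (\<sigma> u)
      = (local_field V E J1 h1 v \<sigma> - local_field V E J2 h2 v \<sigma>)
        - (local_field V E J1 h1 v (flip u \<sigma>) - local_field V E J2 h2 v (flip u \<sigma>))"
    using local_field_diff_flip_nbr[OF sg u, of J1 h1 \<sigma>] local_field_diff_flip_nbr[OF sg u, of J2 h2 \<sigma>]
    by (simp add: algebra_simps)
  finally show ?thesis by linarith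
qed

text \<open>Averaging the previous lemma over the pairs (sigma, flip u sigma), which marginal
  boundedness makes comparably likely.\<close>

lemma ising_coupling_diff_le_expected_field_diff:
  assumes sm1: "soft_ising_model V E J1 h1" and sm2: "soft_ising_model V E J2 h2"
    and mb1: "marg_bounded V (ising_gibbs V E J1 h1) b" and b: "0 \<le> b" and u: "u \<in> V" "E v u"
  shows "2 * b * \<bar>J1 v u - J2 v u\<bar>
       \<le> (\<Sum>\<sigma>\<in>configs V. ising_gibbs V E J1 h1 \<sigma>
            * \<bar>local_field V E J1 h1 v \<sigma> - local_field V E J2 h2 v \<sigma>\<bar>)"
proof -
  let ?\<mu> = "ising_gibbs V E J1 h1" and ?c = "\<bar>J1 v u - J2 v u\<bar>"
  define X where "X = (\<lambda>\<sigma>. \<bar>local_field V E J1 h1 v \<sigma> - local_field V E J2 h2 v \<sigma>\<bar>)"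
  have sg: "simple_graph V E" using sm1 unfolding soft_ising_model_def by auto
  have fin: "finite V" by (rule soft_ising_model_finite[OF sm1])
  have X_flip: "2 * ?c \<le> X \<sigma> + X (flip u \<sigma>)" if "\<sigma> \<in> configs V" for \<sigma>
    unfolding X_def by (rule coupling_diff_le_field_diff_flip_nbr[OF sg u that])
  have pair: "b * (?\<mu> \<sigma> + ?\<mu> (flip u \<sigma>)) * (2 * ?c) \<le> ?\<mu> \<sigma> * X \<sigma> + ?\<mu> (flip u \<sigma>) * X (flip u \<sigma>)"
    if \<sigma>: "\<sigma> \<in> configs V" for \<sigma>
  proof -
    let ?w = "b * (?\<mu> \<sigma> + ?\<mu> (flip u \<sigma>))"
    have "?w \<le> ?\<mu> \<sigma>" by (rule ising_gibbs_ge_marg_bounded[OF sm1 mb1 \<sigma> u(1)])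
    moreover have "?w \<le> ?\<mu> (flip u \<sigma>)"
      using ising_gibbs_ge_marg_bounded[OF sm1 mb1 flip_in_configs[OF \<sigma> u(1)] u(1)] by (simp add: add.commute)
    ultimately have "?w * X \<sigma> \<le> ?\<mu> \<sigma> * X \<sigma>" "?w * X (flip u \<sigma>) \<le> ?\<mu> (flip u \<sigma>) * X (flip u \<sigma>)"
      unfolding X_def by (simp_all add: mult_right_mono)
    moreover have "?w * (2 * ?c) \<le> ?w * (X \<sigma> + X (flip u \<sigma>))"
      using X_flip[OF \<sigma>] b ising_gibbs_nonneg[of V E J1 h1] by (intro mult_left_mono) simp_all
    ultimately show ?thesis by (simp only: distrib_left)
  qed
  have "2 * (2 * b * ?c) = (\<Sum>\<sigma>\<in>configs V. b * (?\<mu> \<sigma> + ?\<mu> (flip u \<sigma>)) * (2 * ?c))"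
    using sum_ising_gibbs_configs[OF fin] sum_configs_flip[OF u(1), of ?\<mu>]
    by (simp add: sum.distrib flip: sum_distrib_left sum_distrib_right)
  also have "\<dots> \<le> (\<Sum>\<sigma>\<in>configs V. ?\<mu> \<sigma> * X \<sigma> + ?\<mu> (flip u \<sigma>) * X (flip u \<sigma>))"
    by (rule sum_mono) (rule pair)
  also have "\<dots> = 2 * (\<Sum>\<sigma>\<in>configs V. ?\<mu> \<sigma> * X \<sigma>)"
    using sum_configs_flip[OF u(1), of "\<lambda>\<sigma>. ?\<mu> \<sigma> * X \<sigma>"] by (simp add: sum.distrib)
  finally show ?thesis unfolding X_def by simp
qed

lemma ising_ext_field_diff_le_expected_field_diff:
  assumes sm1: "soft_ising_model V E J1 h1"
  shows "\<bar>h1 v - h2 v\<bar>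
       \<le> (\<Sum>\<sigma>\<in>configs V. ising_gibbs V E J1 h1 \<sigma>
            * \<bar>local_field V E J1 h1 v \<sigma> - local_field V E J2 h2 v \<sigma>\<bar>)
         + (\<Sum>x\<in>{u\<in>V. E v u}. \<bar>J1 v x - J2 v x\<bar>)"
proof -
  let ?\<mu> = "ising_gibbs V E J1 h1" and ?N = "{u\<in>V. E v u}"
  define C where "C = (\<Sum>x\<in>?N. \<bar>J1 v x - J2 v x\<bar>)"
  define X where "X = (\<lambda>\<sigma>. \<bar>local_field V E J1 h1 v \<sigma> - local_field V E J2 h2 v \<sigma>\<bar>)"
  have pointwise: "\<bar>h1 v - h2 v\<bar> \<le> X \<sigma> + C" if \<sigma>: "\<sigma> \<in> configs V" for \<sigma>
  proof -
    have "local_field V E J1 h1 v \<sigma> - local_field V E J2 h2 v \<sigma>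
        = (h1 v - h2 v) + (\<Sum>x\<in>?N. (J1 v x - J2 v x) * of_int (\<sigma> x))"
      unfolding local_field_def by (simp add: sum_subtractf[symmetric] algebra_simps)
    moreover have "(\<Sum>x\<in>?N. \<bar>(J1 v x - J2 v x) * of_int (\<sigma> x)\<bar>) = C"
      unfolding C_def by (rule sum.cong) (use abs_spin[OF \<sigma>] in \<open>auto simp: abs_mult\<close>)
    then have "\<bar>\<Sum>x\<in>?N. (J1 v x - J2 v x) * of_int (\<sigma> x)\<bar> \<le> C"
      using sum_abs[of "\<lambda>x. (J1 v x - J2 v x) * of_int (\<sigma> x)" ?N] by simp
    ultimately show ?thesis unfolding X_def by linarith
  qed
  have "\<bar>h1 v - h2 v\<bar> = (\<Sum>\<sigma>\<in>configs V. ?\<mu> \<sigma> * \<bar>h1 v - h2 v\<bar>)"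
    using sum_ising_gibbs_configs[OF soft_ising_model_finite[OF sm1]] by (simp flip: sum_distrib_right)
  also have "\<dots> \<le> (\<Sum>\<sigma>\<in>configs V. ?\<mu> \<sigma> * (X \<sigma> + C))"
    by (intro sum_mono mult_left_mono pointwise ising_gibbs_nonneg)
  also have "\<dots> = (\<Sum>\<sigma>\<in>configs V. ?\<mu> \<sigma> * X \<sigma>) + C"
    using sum_ising_gibbs_configs[OF soft_ising_model_finite[OF sm1]]
    by (simp add: distrib_left sum.distrib flip: sum_distrib_right)
  finally show ?thesis unfolding X_def C_def .
qed

lemma ising_coupling_diff_le_dtv:
  assumes sm1: "soft_ising_model V E J1 h1" and sm2: "soft_ising_model V E J2 h2"
    and mb1: "marg_bounded V (ising_gibbs V E J1 h1) b" and mb2: "marg_bounded V (ising_gibbs V E J2 h2) b"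
    and b: "0 < b" and v: "v \<in> V" and u: "E v u"
  shows "b\<^sup>2 * \<bar>J1 v u - J2 v u\<bar> \<le> dtv V (ising_gibbs V E J1 h1) (ising_gibbs V E J2 h2)"
proof -
  have "u \<in> V" using sm1 u unfolding soft_ising_model_def simple_graph_def by blast
  define K where "K = (\<Sum>\<sigma>\<in>configs V. ising_gibbs V E J1 h1 \<sigma>
                         * \<bar>local_field V E J1 h1 v \<sigma> - local_field V E J2 h2 v \<sigma>\<bar>)"
  have "2 * b * \<bar>J1 v u - J2 v u\<bar> \<le> K"
    unfolding K_def using b \<open>u \<in> V\<close> u by (intro ising_coupling_diff_le_expected_field_diff[OF sm1 sm2 mb1]) auto
  then have "b * (2 * b * \<bar>J1 v u - J2 v u\<bar>) \<le> b * K" using b by (simp add: mult_left_mono)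
  with ising_expected_field_diff_le_dtv[OF sm1 sm2 mb1 mb2 b v, folded K_def]
  show ?thesis by (simp add: power2_eq_square algebra_simps)
qed

lemma ising_ext_field_diff_le_dtv:
  assumes sm1: "soft_ising_model V E J1 h1" and sm2: "soft_ising_model V E J2 h2"
    and mb1: "marg_bounded V (ising_gibbs V E J1 h1) b" and mb2: "marg_bounded V (ising_gibbs V E J2 h2) b"
    and b: "0 < b" and v: "v \<in> V"
  shows "b\<^sup>2 * (\<bar>h1 v - h2 v\<bar> / (real (deg V E v) + 1))
       \<le> dtv V (ising_gibbs V E J1 h1) (ising_gibbs V E J2 h2)"
proof -
  let ?d = "dtv V (ising_gibbs V E J1 h1) (ising_gibbs V E J2 h2)" and ?N = "{u\<in>V. E v u}"
  define K where "K = (\<Sum>\<sigma>\<in>configs V. ising_gibbs V E J1 h1 \<sigma>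
                         * \<bar>local_field V E J1 h1 v \<sigma> - local_field V E J2 h2 v \<sigma>\<bar>)"
  have K0: "K \<ge> 0" unfolding K_def by (intro sum_nonneg mult_nonneg_nonneg ising_gibbs_nonneg) simp
  have "2 * b \<le> 1" by (rule marg_bounded_ising_le_half[OF sm1 mb1 v])
  have "(\<Sum>x\<in>?N. 2 * b * \<bar>J1 v x - J2 v x\<bar>) \<le> (\<Sum>x\<in>?N. K)"
    unfolding K_def using b by (intro sum_mono ising_coupling_diff_le_expected_field_diff[OF sm1 sm2 mb1]) auto
  then have "2 * b * (\<Sum>x\<in>?N. \<bar>J1 v x - J2 v x\<bar>) \<le> real (deg V E v) * K"
    by (simp add: deg_def sum_distrib_left)
  moreover have "2 * b * \<bar>h1 v - h2 v\<bar> \<le> 2 * b * (K + (\<Sum>x\<in>?N. \<bar>J1 v x - J2 v x\<bar>))"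
    using ising_ext_field_diff_le_expected_field_diff[of V E J1 h1 v h2 J2, OF sm1] b unfolding K_def by simp
  moreover have "2 * b * K \<le> K" using \<open>2 * b \<le> 1\<close> K0 b by (intro mult_left_le_one_le) auto
  ultimately have "2 * b * \<bar>h1 v - h2 v\<bar> \<le> (real (deg V E v) + 1) * K" by (simp add: algebra_simps)
  then have "b * (2 * b * \<bar>h1 v - h2 v\<bar>) \<le> (real (deg V E v) + 1) * (b * K)"
    using b by (simp add: mult_left_mono mult.left_commute)
  also have "\<dots> \<le> (real (deg V E v) + 1) * (2 * ?d)"
    using ising_expected_field_diff_le_dtv[OF sm1 sm2 mb1 mb2 b v, folded K_def] by (simp add: mult_left_mono)
  finally show ?thesis by (simp add: power2_eq_square field_simps)
qed

lemma mult_Max_insert_0_le: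
  fixes f :: "'a \<Rightarrow> real"
  assumes "finite S" "c \<ge> 0" "d \<ge> 0" "\<And>x. x \<in> S \<Longrightarrow> c * f x \<le> d"
  shows "c * Max (insert 0 (f ` S)) \<le> d"
proof -
  have "Max (insert 0 (f ` S)) \<in> insert 0 (f ` S)" by (rule Max_in) (use assms in auto)
  then show ?thesis using assms by auto
qed

lemma dtv_ge_dpar_hc_uniqueness:
  assumes hm1: "hardcore_model V E lam1" and hm2: "hardcore_model V E lam2" and D: "max_deg V E \<ge> 3"
    and u1: "uniqueness V E lam1" and u2: "uniqueness V E lam2"
  shows "dtv V (hardcore_gibbs V E lam1) (hardcore_gibbs V E lam2) \<ge> (1/5000) * dpar_hc V lam1 lam2"
proof -
  let ?d = "\<lambda>lam lam'. dtv V (hardcore_gibbs V E lam) (hardcore_gibbs V E lam')"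
  have le1: "\<forall>u\<in>V. lam1 u \<le> lambda_c (max_deg V E)" and le2: "\<forall>u\<in>V. lam2 u \<le> lambda_c (max_deg V E)"
    using uniqueness_le_lambda_c[OF u1 D] uniqueness_le_lambda_c[OF u2 D] by auto
  have "(1/5000) * \<bar>lam1 v - lam2 v\<bar> \<le> ?d lam1 lam2" if "v \<in> V" for v
    using hardcore_activity_diff_le_uniqueness[OF hm1 hm2 that D le1 le2]
      hardcore_activity_diff_le_uniqueness[OF hm2 hm1 that D le2 le1] dtv_commute[of V "hardcore_gibbs V E lam1"]
    by (simp add: abs_le_iff)
  then show ?thesis
    unfolding dpar_hc_def by (intro mult_Max_insert_0_le hardcore_model_finite[OF hm1] dtv_nonneg) auto
qed

lemma dtv_ge_dpar_hc_marg_bounded: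
  assumes hm1: "hardcore_model V E lam1" and hm2: "hardcore_model V E lam2" and b: "0 < b"
    and mb1: "marg_bounded V (hardcore_gibbs V E lam1) b" and mb2: "marg_bounded V (hardcore_gibbs V E lam2) b"
  shows "dtv V (hardcore_gibbs V E lam1) (hardcore_gibbs V E lam2) \<ge> b ^ 3 * dpar_hc V lam1 lam2"
proof -
  have "b ^ 3 * \<bar>lam1 v - lam2 v\<bar> \<le> dtv V (hardcore_gibbs V E lam1) (hardcore_gibbs V E lam2)"
    if v: "v \<in> V" for v
  proof (cases "lam2 v \<le> lam1 v")
    case True
    then show ?thesis using hardcore_activity_diff_le_marg_bounded[OF hm1 hm2 b mb1 v] by simp
  next
    case False
    then show ?thesis using hardcore_activity_diff_le_marg_bounded[OF hm2 hm1 b mb2 v]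
      dtv_commute[of V "hardcore_gibbs V E lam1"] by simp
  qed
  then show ?thesis
    unfolding dpar_hc_def using b by (intro mult_Max_insert_0_le hardcore_model_finite[OF hm1] dtv_nonneg) auto
qed

lemma dtv_ge_dpar_ising_marg_bounded:
  assumes sm1: "soft_ising_model V E J1 h1" and sm2: "soft_ising_model V E J2 h2" and b: "0 < b"
    and mb1: "marg_bounded V (ising_gibbs V E J1 h1) b" and mb2: "marg_bounded V (ising_gibbs V E J2 h2) b"
  shows "dtv V (ising_gibbs V E J1 h1) (ising_gibbs V E J2 h2) \<ge> b ^ 2 / 2 * dpar_ising V E J1 h1 J2 h2"
proof -
  let ?d = "dtv V (ising_gibbs V E J1 h1) (ising_gibbs V E J2 h2)"
  have fin: "finite V" by (rule soft_ising_model_finite[OF sm1])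
  have half: "b\<^sup>2 / 2 * y \<le> ?d" if "b\<^sup>2 * y \<le> ?d" "y \<ge> 0" for y
    using that dtv_nonneg[of V "ising_gibbs V E J1 h1" "ising_gibbs V E J2 h2"] by simp
  have "b\<^sup>2 / 2 * \<bar>J1 p q - J2 p q\<bar> \<le> ?d" if "p \<in> V" for p q
  proof (cases "E p q")
    case True
    then show ?thesis by (intro half ising_coupling_diff_le_dtv[OF sm1 sm2 mb1 mb2 b that]) simp_all
  next
    case False
    then have "J1 p q = 0" "J2 p q = 0" using sm1 sm2 unfolding soft_ising_model_def by auto
    then show ?thesis using dtv_nonneg[of V "ising_gibbs V E J1 h1"] by simp
  qed
  then have "b\<^sup>2 / 2 * Max (insert 0 ((\<lambda>(u, v). \<bar>J1 u v - J2 u v\<bar>) ` (V \<times> V))) \<le> ?d"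
    using fin by (intro mult_Max_insert_0_le dtv_nonneg) auto
  moreover have "b\<^sup>2 / 2 * Max (insert 0 ((\<lambda>v. \<bar>h1 v - h2 v\<bar> / (real (deg V E v) + 1)) ` V)) \<le> ?d"
    using fin by (intro mult_Max_insert_0_le dtv_nonneg half ising_ext_field_diff_le_dtv[OF sm1 sm2 mb1 mb2 b]) auto
  ultimately show ?thesis unfolding dpar_ising_def by (simp add: max_def)
qed

theorem lemma2p2:
  fixes V :: "'v set" and E :: "'v \<Rightarrow> 'v \<Rightarrow> bool"
  shows
   "(\<forall>lam1 lam2. hardcore_model V E lam1 \<and> hardcore_model V E lam2 \<and> max_deg V E \<ge> 3
       \<and> uniqueness V E lam1 \<and> uniqueness V E lam2 \<longrightarrow>
       dtv V (hardcore_gibbs V E lam1) (hardcore_gibbs V E lam2) \<ge> (1/5000) * dpar_hc V lam1 lam2)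
  \<and> (\<forall>lam1 lam2 b. hardcore_model V E lam1 \<and> hardcore_model V E lam2 \<and> 0 < b \<and> b < 1
       \<and> marg_bounded V (hardcore_gibbs V E lam1) b \<and> marg_bounded V (hardcore_gibbs V E lam2) b \<longrightarrow>
       dtv V (hardcore_gibbs V E lam1) (hardcore_gibbs V E lam2) \<ge> b ^ 3 * dpar_hc V lam1 lam2)
  \<and> (\<forall>J1 h1 J2 h2 b. soft_ising_model V E J1 h1 \<and> soft_ising_model V E J2 h2 \<and> 0 < b \<and> b < 1
       \<and> marg_bounded V (ising_gibbs V E J1 h1) b \<and> marg_bounded V (ising_gibbs V E J2 h2) b \<longrightarrow>
       dtv V (ising_gibbs V E J1 h1) (ising_gibbs V E J2 h2) \<ge> b ^ 2 / 2 * dpar_ising V E J1 h1 J2 h2)"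
  using dtv_ge_dpar_hc_uniqueness dtv_ge_dpar_hc_marg_bounded dtv_ge_dpar_ising_marg_bounded by blast

end
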